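(* Let $(X,\omega)\in\mathcal{R}_1(a,-b_1,\dots,-b_p)$ and let $\sigma$ be a nontrivial automorphism of $(X,\omega)$. Then one of the following holds: (1) $\sigma^*\omega=-\omega$ and $\sigma^2=\mathrm{Id}$ (hyperelliptic automorphism); (2) $\sigma^3=\mathrm{Id}$ and $p\in\{1,2\}$; (3) $\sigma^4=\mathrm{Id}$ and $p=1$.
   Context: $\mathcal{R}_1(a,-b_1,\dots,-b_p)$ (integers $b_j\ge2$, $a=\sum_jb_j$) is the moduli space of pairs $(X,\omega)$ with $X$ a genus one compact Riemann surface and $\omega$ a meromorphic $1$-form with a single zero of order $a$ and labeled poles $q_1,\dots,q_p$ of orders $b_1,\dots,b_p$, each with zero residue. An automorphism here means a biholomorphism $\sigma:X\to X$ fixing each labeled pole and with $\sigma^*\omega$ a constant multiple of $\omega$ (i.e. an automorphism of the projectivized point $(X,[\omega])$). *)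

theory Defs
  imports "HOL-Complex_Analysis.Complex_Analysis"
begin

definition lattice :: "complex \<Rightarrow> complex \<Rightarrow> complex set" where
  "lattice w1 w2 = {of_int m * w1 + of_int n * w2 | m n. True}"

definition lat_cong :: "complex set \<Rightarrow> complex \<Rightarrow> complex \<Rightarrow> bool" where
  "lat_cong L z w \<longleftrightarrow> z - w \<in> L"

text \<open>f (as a function on C) represents a meromorphic 1-form f(z)dz on the torus C/L.\<close>
definition lattice_periodic_meromorphic :: "complex set \<Rightarrow> (complex \<Rightarrow> complex) \<Rightarrow> bool" where
  "lattice_periodic_meromorphic L f \<longleftrightarrow>
     f meromorphic_on UNIV \<and>
     (\<forall>l\<in>L. \<forall>z. eventually (\<lambda>w. f (w + l) = f w) (at z))"

text \<open>A holomorphic map s : C \<rightarrow> C descending to a biholomorphism of the torus C/L.\<close>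
definition torus_automorphism_lift :: "complex set \<Rightarrow> (complex \<Rightarrow> complex) \<Rightarrow> bool" where
  "torus_automorphism_lift L s \<longleftrightarrow>
     s holomorphic_on UNIV \<and>
     (\<forall>l\<in>L. \<forall>z. lat_cong L (s (z + l)) (s z)) \<and>
     (\<forall>w. \<exists>z. lat_cong L (s z) w) \<and>
     (\<forall>z1 z2. lat_cong L (s z1) (s z2) \<longrightarrow> lat_cong L z1 z2)"

text \<open>Pullback of the 1-form f(z)dz by s equals c times f(z)dz (as meromorphic forms).\<close>
definition pullback_eq :: "(complex \<Rightarrow> complex) \<Rightarrow> (complex \<Rightarrow> complex) \<Rightarrow> complex \<Rightarrow> bool" where
  "pullback_eq s f c \<longleftrightarrow>
     (\<forall>z. eventually (\<lambda>w. f (s w) * deriv s w = c * f w) (at z))"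

end

theory Submission
  imports Defs "HOL-Computational_Algebra.Primes"
begin

section \<open>Lattices in the complex plane\<close>

lemma lattice_iff: "z \<in> lattice w1 w2 \<longleftrightarrow> (\<exists>m n::int. z = of_int m * w1 + of_int n * w2)"
  unfolding lattice_def by auto

lemma lattice_comb [intro]: "of_int m * w1 + of_int n * w2 \<in> lattice w1 w2"
  unfolding lattice_iff by blast

lemma lattice_0 [simp]: "0 \<in> lattice w1 w2"
  using lattice_comb[of 0 w1 0 w2] by simp

lemma lattice_uminus [intro]:
  assumes "x \<in> lattice w1 w2"
  shows "- x \<in> lattice w1 w2"
proof -
  obtain m n :: int where "x = of_int m * w1 + of_int n * w2"
    using assms unfolding lattice_iff by blast
  then have "- x = of_int (- m) * w1 + of_int (- n) * w2"
    by (simp add: algebra_simps)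
  then show ?thesis
    unfolding lattice_iff by blast
qed

lemma lattice_diff [intro]:
  assumes "x \<in> lattice w1 w2" "y \<in> lattice w1 w2"
  shows "x - y \<in> lattice w1 w2"
proof -
  obtain m n m' n' :: int where "x = of_int m * w1 + of_int n * w2" "y = of_int m' * w1 + of_int n' * w2"
    using assms unfolding lattice_iff by blast
  then have "x - y = of_int (m - m') * w1 + of_int (n - n') * w2"
    by (simp add: algebra_simps)
  then show ?thesis
    unfolding lattice_iff by blast
qed

locale complex_lattice =
  fixes w1 w2 :: complex
  assumes ratio_nonreal: "Im (w2 / w1) \<noteq> 0"
begin

abbreviation "L \<equiv> lattice w1 w2"

definition "\<tau> = w2 / w1"

lemma w1_nonzero: "w1 \<noteq> 0"
  using ratio_nonreal by auto

lemma Im_\<tau>_nonzero: "Im \<tau> \<noteq> 0"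
  using ratio_nonreal by (simp add: \<tau>_def)

lemma combination_eq: "a * w1 + b * w2 = (a + b * \<tau>) * w1"
  using w1_nonzero by (simp add: \<tau>_def distrib_right)

lemma real_combination_eq_0_iff:
  "of_real x * w1 + of_real y * w2 = 0 \<longleftrightarrow> x = 0 \<and> y = 0"
proof
  assume "of_real x * w1 + of_real y * w2 = 0"
  then have "of_real x + of_real y * \<tau> = 0"
    using combination_eq w1_nonzero by (metis mult_eq_0_iff)
  moreover have "Im (of_real x + of_real y * \<tau>) = y * Im \<tau>"
    by simp
  ultimately show "x = 0 \<and> y = 0"
    using Im_\<tau>_nonzero by simp
qed simp

lemma int_combination_eq_iff:
  "of_int m * w1 + of_int n * w2 = of_int m' * w1 + of_int n' * w2 \<longleftrightarrow> m = m' \<and> n = n'"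
proof -
  have "of_int m * w1 + of_int n * w2 - (of_int m' * w1 + of_int n' * w2)
      = of_real (of_int (m - m')) * w1 + of_real (of_int (n - n')) * w2"
    by (simp add: algebra_simps)
  then show ?thesis
    using real_combination_eq_0_iff[of "of_int (m - m')" "of_int (n - n')"] by auto
qed

lemma half_w1_notin_lattice: "w1 / 2 \<notin> L"
proof
  assume "w1 / 2 \<in> L"
  then obtain m n :: int where "w1 / 2 = of_int m * w1 + of_int n * w2"
    unfolding lattice_iff by blast
  then have "of_real (of_int m - 1/2) * w1 + of_real (of_int n) * w2 = 0"
    by (simp add: algebra_simps)
  then have "2 * of_int m = (1::real)"
    unfolding real_combination_eq_0_iff by simp
  then have "2 * m = 1"
    by linarith
  then show False
    by presburger
qed

lemma exists_real_coords: "\<exists>x y::real. z = of_real x * w1 + of_real y * w2"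
proof -
  define y where "y = Im (z / w1) / Im \<tau>"
  define x where "x = Re (z / w1) - y * Re \<tau>"
  have "z / w1 = of_real x + of_real y * \<tau>"
    using Im_\<tau>_nonzero by (simp add: complex_eq_iff x_def y_def)
  then have "z = (of_real x + of_real y * \<tau>) * w1"
    using w1_nonzero by (simp add: field_simps)
  then show ?thesis
    using combination_eq by metis
qed

lemma lattice_discrete: "\<exists>\<delta>>0. \<forall>l\<in>L. l \<noteq> 0 \<longrightarrow> \<delta> \<le> norm l"
proof (intro exI conjI ballI impI)
  show "norm w1 * min 1 \<bar>Im \<tau>\<bar> > 0"
    using w1_nonzero Im_\<tau>_nonzero by simp
  fix l assume "l \<in> L" "l \<noteq> 0"
  then obtain m n :: int where l: "l = (of_int m + of_int n * \<tau>) * w1"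
    using combination_eq unfolding lattice_iff by metis
  have "min 1 \<bar>Im \<tau>\<bar> \<le> norm (of_int m + of_int n * \<tau>)"
  proof (cases "n = 0")
    case True
    then show ?thesis
      using \<open>l \<noteq> 0\<close> l by auto
  next
    case False
    then have "(1::real) \<le> \<bar>of_int n\<bar>"
      by (metis of_int_1_le_iff of_int_abs int_one_le_iff_zero_less zero_less_abs_iff)
    then have "\<bar>Im \<tau>\<bar> \<le> \<bar>of_int n\<bar> * \<bar>Im \<tau>\<bar>"
      using mult_right_mono[of 1 "\<bar>of_int n\<bar>" "\<bar>Im \<tau>\<bar>"] by simp
    also have "\<dots> \<le> norm (of_int m + of_int n * \<tau>)"
      using abs_Im_le_cmod[of "of_int m + of_int n * \<tau>"] by (simp add: abs_mult)
    finally show ?thesis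
      by simp
  qed
  then show "norm w1 * min 1 \<bar>Im \<tau>\<bar> \<le> norm l"
    by (simp add: l norm_mult mult.commute mult_left_mono)
qed

lemma bounded_range_periodic:
  fixes g :: "complex \<Rightarrow> 'a::real_normed_vector"
  assumes cont: "continuous_on UNIV g" and per: "\<And>l z. l \<in> L \<Longrightarrow> g (z + l) = g z"
  shows "bounded (range g)"
proof -
  define K where "K = (\<lambda>(x, y). of_real x * w1 + of_real y * w2) ` ({0..1::real} \<times> {0..1::real})"
  have "compact K"
    unfolding K_def case_prod_beta
    by (intro compact_continuous_image compact_Times compact_Icc continuous_intros)
  then have "bounded (g ` K)"
    by (intro compact_imp_bounded compact_continuous_image continuous_on_subset[OF cont]) auto
  moreover have "range g \<subseteq> g ` K"
  proof clarify
    fix z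
    obtain x y :: real where z: "z = of_real x * w1 + of_real y * w2"
      using exists_real_coords by blast
    define l where "l = of_int \<lfloor>x\<rfloor> * w1 + of_int \<lfloor>y\<rfloor> * w2"
    have "z - l = of_real (frac x) * w1 + of_real (frac y) * w2"
      by (simp add: z l_def frac_def algebra_simps)
    then have "z - l \<in> K"
      unfolding K_def using frac_lt_1[of x] frac_lt_1[of y] by force
    moreover have "- l \<in> L"
      unfolding l_def by (intro lattice_uminus lattice_comb)
    then have "g (z - l) = g z"
      using per[of "- l" z] by simp
    ultimately show "g z \<in> g ` K"
      by (metis image_eqI)
  qed
  ultimately show ?thesis
    using bounded_subset by blast
qed

lemma periodic_entire_constant:
  assumes "g holomorphic_on UNIV" and "\<And>l z. l \<in> L \<Longrightarrow> g (z + l) = g z"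
  shows "\<exists>c. \<forall>z. g z = c"
proof -
  have "bounded (range g)"
    using assms by (intro bounded_range_periodic holomorphic_on_imp_continuous_on)
  then show ?thesis
    using Liouville_theorem[OF assms(1)] unfolding constant_on_def by blast
qed

section \<open>Automorphisms of the torus\<close>

lemma continuous_lattice_valued_constant:
  fixes \<phi> :: "complex \<Rightarrow> complex"
  assumes "continuous_on UNIV \<phi>" "\<And>z. \<phi> z \<in> L"
  shows "\<phi> z = \<phi> w"
proof -
  obtain \<delta> where \<delta>: "\<delta> > 0" "\<And>l. l \<in> L \<Longrightarrow> l \<noteq> 0 \<Longrightarrow> \<delta> \<le> norm l"
    using lattice_discrete by blast
  have "\<phi> constant_on UNIV"
  proof (rule continuous_discrete_range_constant)
    fix x :: complex
    show "\<exists>e>0. \<forall>y. y \<in> UNIV \<and> \<phi> y \<noteq> \<phi> x \<longrightarrow> e \<le> norm (\<phi> y - \<phi> x)"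
    proof (intro exI[of _ \<delta>] conjI allI impI)
      fix y assume "y \<in> UNIV \<and> \<phi> y \<noteq> \<phi> x"
      then show "\<delta> \<le> norm (\<phi> y - \<phi> x)"
        using \<delta>(2)[of "\<phi> y - \<phi> x"] assms(2) by (simp add: lattice_diff)
    qed (rule \<delta>(1))
  qed (use assms(1) in auto)
  then show ?thesis
    unfolding constant_on_def by (metis UNIV_I)
qed

lemma torus_map_affine:
  assumes hol: "s holomorphic_on UNIV" and per: "\<And>l z. l \<in> L \<Longrightarrow> s (z + l) - s z \<in> L"
  obtains \<alpha> \<beta> where "s = (\<lambda>z. \<alpha> * z + \<beta>)" "\<forall>l\<in>L. \<alpha> * l \<in> L"
proof -
  have cont: "continuous_on UNIV s"
    using hol holomorphic_on_imp_continuous_on by blast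
  have shift: "s (z + l) = s z + (s l - s 0)" if l: "l \<in> L" for l z
  proof -
    have "s (z + l) - s z = s (0 + l) - s 0"
      using per[OF l]
      by (intro continuous_lattice_valued_constant[where \<phi>="\<lambda>z. s (z + l) - s z"])
         (auto intro!: continuous_intros continuous_on_compose2[OF cont])
    then show ?thesis
      by (metis diff_add_cancel add.commute add_0)
  qed
  have ds: "(s has_field_derivative deriv s z) (at z)" for z
    using hol by (intro holomorphic_derivI) auto
  have "deriv s (z + l) = deriv s z" if "l \<in> L" for l z
  proof (rule DERIV_unique)
    show "((\<lambda>x. s (x + l)) has_field_derivative deriv s (z + l)) (at z)"
      using ds[of "z + l"] by (simp add: DERIV_shift)
    show "((\<lambda>x. s (x + l)) has_field_derivative deriv s z) (at z)"
      unfolding shift[OF that] by (auto intro!: derivative_eq_intros ds)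
  qed
  moreover have "deriv s holomorphic_on UNIV"
    using hol by (intro holomorphic_deriv) auto
  ultimately obtain \<alpha> where \<alpha>: "\<And>z. deriv s z = \<alpha>"
    using periodic_entire_constant by metis
  have "\<exists>\<beta>. \<forall>z\<in>UNIV. s z - \<alpha> * z = \<beta>"
    by (rule has_field_derivative_zero_constant)
       (use ds \<alpha> in \<open>auto intro!: derivative_eq_intros\<close>)
  then obtain \<beta> where "s = (\<lambda>z. \<alpha> * z + \<beta>)"
    by (auto simp: fun_eq_iff algebra_simps)
  moreover have "\<forall>l\<in>L. \<alpha> * l \<in> L"
    using per[of _ 0] \<open>s = _\<close> by simp
  ultimately show ?thesis
    by (rule that)
qed

lemma torus_automorphism_affine:
  assumes "torus_automorphism_lift L s"
  obtains \<alpha> \<beta> where "\<alpha> \<noteq> 0" "s = (\<lambda>z. \<alpha> * z + \<beta>)"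
    "\<forall>l\<in>L. \<alpha> * l \<in> L" "\<forall>l\<in>L. l / \<alpha> \<in> L"
proof -
  have hol: "s holomorphic_on UNIV" and per: "\<And>l z. l \<in> L \<Longrightarrow> s (z + l) - s z \<in> L"
    and inj: "\<And>z1 z2. s z1 - s z2 \<in> L \<Longrightarrow> z1 - z2 \<in> L"
    using assms unfolding torus_automorphism_lift_def lat_cong_def by auto
  obtain \<alpha> \<beta> where s: "s = (\<lambda>z. \<alpha> * z + \<beta>)" and mult: "\<forall>l\<in>L. \<alpha> * l \<in> L"
    using torus_map_affine[of s, OF hol per] .
  have nonzero: "\<alpha> \<noteq> 0"
  proof
    assume "\<alpha> = 0"
    then have "s (w1 / 2) - s 0 \<in> L"
      by (simp add: s)
    then have "w1 / 2 - 0 \<in> L"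
      by (rule inj)
    then show False
      using half_w1_notin_lattice by simp
  qed
  have "\<forall>l\<in>L. l / \<alpha> \<in> L"
    using inj[of "l / \<alpha>" 0 for l] nonzero by (simp add: s)
  with nonzero s mult show ?thesis
    by (rule that)
qed

section \<open>Multipliers of a lattice\<close>

lemma multiplier_matrix:
  assumes "\<forall>l\<in>L. \<alpha> * l \<in> L"
  obtains a b c d :: int
  where "\<alpha> * w1 = of_int a * w1 + of_int b * w2" "\<alpha> * w2 = of_int c * w1 + of_int d * w2"
    and "\<alpha>\<^sup>2 - of_int (a + d) * \<alpha> + of_int (a * d - b * c) = 0" "\<alpha> = of_int a + of_int b * \<tau>"
proof -
  have "\<alpha> * w1 \<in> L" "\<alpha> * w2 \<in> L"
    using assms lattice_comb[of 1 w1 0 w2] lattice_comb[of 0 w1 1 w2] by auto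
  then obtain a b c d :: int where ab: "\<alpha> * w1 = of_int a * w1 + of_int b * w2"
    and cd: "\<alpha> * w2 = of_int c * w1 + of_int d * w2"
    unfolding lattice_iff by blast
  have "\<alpha> * w1 = (of_int a + of_int b * \<tau>) * w1"
    using ab combination_eq by metis
  then have \<alpha>: "\<alpha> = of_int a + of_int b * \<tau>"
    using w1_nonzero by simp
  have "(\<alpha> * \<tau>) * w1 = \<alpha> * w2"
    using w1_nonzero by (simp add: \<tau>_def)
  also have "\<dots> = (of_int c + of_int d * \<tau>) * w1"
    using cd combination_eq by metis
  finally have \<alpha>\<tau>: "\<alpha> * \<tau> = of_int c + of_int d * \<tau>"
    using w1_nonzero by simp
  have "\<alpha>\<^sup>2 - of_int (a + d) * \<alpha> + of_int (a * d - b * c)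
      = of_int b * (\<alpha> * \<tau> - of_int c - of_int d * \<tau>)"
    unfolding \<alpha> by (simp add: algebra_simps power2_eq_square)
  also have "\<dots> = 0"
    using \<alpha>\<tau> by simp
  finally show ?thesis
    using that ab cd \<alpha> by blast
qed

lemma real_lattice_unit:
  assumes "Im \<alpha> = 0" "\<alpha> \<noteq> 0" "\<forall>l\<in>L. \<alpha> * l \<in> L" "\<forall>l\<in>L. l / \<alpha> \<in> L"
  shows "\<alpha> = 1 \<or> \<alpha> = -1"
proof -
  have "\<forall>l\<in>L. inverse \<alpha> * l \<in> L"
    using assms(4) by (simp add: field_simps)
  then obtain a b a' b' :: int where "\<alpha> = of_int a + of_int b * \<tau>"
    and "inverse \<alpha> = of_int a' + of_int b' * \<tau>"
    using multiplier_matrix assms(3) by metis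
  moreover from this have "b = 0" "b' = 0"
    using assms(1) Im_\<tau>_nonzero by (auto dest: arg_cong[of _ _ Im])
  ultimately have \<alpha>: "\<alpha> = of_int a" and "of_int (a * a') = \<alpha> * inverse \<alpha>"
    by simp_all
  then have "of_int (a * a') = (1::complex)"
    using assms(2) by simp
  then have "a * a' = 1"
    by (simp only: of_int_eq_1_iff)
  then show ?thesis
    using zmult_eq_1_iff \<alpha> by auto
qed

lemma int_quadratic_nonreal_root:
  fixes x :: complex and t d :: int
  assumes root: "x\<^sup>2 - of_int t * x + of_int d = 0" and "Im x \<noteq> 0"
  shows "of_int d = (cmod x)\<^sup>2" "of_int t = 2 * Re x"
proof -
  have "cnj (x\<^sup>2 - of_int t * x + of_int d) = 0"
    using root by simp
  then have root': "(cnj x)\<^sup>2 - of_int t * cnj x + of_int d = 0"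
    by simp
  have "(x - cnj x) * (x + cnj x - of_int t)
      = (x\<^sup>2 - of_int t * x + of_int d) - ((cnj x)\<^sup>2 - of_int t * cnj x + of_int d)"
    by (simp add: algebra_simps power2_eq_square)
  then have "(x - cnj x) * (x + cnj x - of_int t) = 0"
    using root root' by simp
  moreover have "x - cnj x \<noteq> 0"
    using \<open>Im x \<noteq> 0\<close> by (simp add: complex_eq_iff)
  ultimately have t: "of_int t = x + cnj x"
    by simp
  then have "of_int d = x * cnj x"
    using root by (simp add: algebra_simps power2_eq_square)
  then show "of_int d = (cmod x)\<^sup>2"
    by (metis complex_norm_square of_real_eq_iff of_real_of_int_eq)
  show "of_int t = 2 * Re x"
    using t by (metis complex_add_cnj of_real_eq_iff of_real_of_int_eq)
qed

lemma nonreal_lattice_unit: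
  assumes "Im \<alpha> \<noteq> 0" "\<forall>l\<in>L. \<alpha> * l \<in> L" "\<forall>l\<in>L. l / \<alpha> \<in> L"
  obtains a b c d :: int
  where "\<alpha> * w1 = of_int a * w1 + of_int b * w2" "\<alpha> * w2 = of_int c * w1 + of_int d * w2"
    and "a * d - b * c = 1" "a + d \<in> {-1, 0, 1}" "\<alpha>\<^sup>2 = of_int (a + d) * \<alpha> - 1"
proof -
  obtain a b c d :: int where M: "\<alpha> * w1 = of_int a * w1 + of_int b * w2"
    "\<alpha> * w2 = of_int c * w1 + of_int d * w2"
    and root: "\<alpha>\<^sup>2 - of_int (a + d) * \<alpha> + of_int (a * d - b * c) = 0"
    and "\<alpha> = of_int a + of_int b * \<tau>"
    using multiplier_matrix[OF assms(2)] .
  have inv_mult: "\<forall>l\<in>L. inverse \<alpha> * l \<in> L"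
    using assms(3) by (simp add: field_simps)
  obtain a' b' c' d' :: int
    where root': "(inverse \<alpha>)\<^sup>2 - of_int (a' + d') * inverse \<alpha> + of_int (a' * d' - b' * c') = 0"
    using multiplier_matrix[OF inv_mult] by metis
  note norm = int_quadratic_nonreal_root[OF root assms(1)]
  have "\<alpha> \<noteq> 0"
    using assms(1) by auto
  have "Im (inverse \<alpha>) \<noteq> 0"
    using assms(1) by simp
  then have "of_int ((a * d - b * c) * (a' * d' - b' * c')) = (cmod \<alpha> * cmod (inverse \<alpha>))\<^sup>2"
    using norm(1) int_quadratic_nonreal_root(1)[OF root'] by (simp add: power_mult_distrib)
  also have "cmod \<alpha> * cmod (inverse \<alpha>) = 1"
    using \<open>\<alpha> \<noteq> 0\<close> by (simp add: norm_inverse)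
  finally have "(a * d - b * c) * (a' * d' - b' * c') = 1"
    by (simp only: power_one of_int_eq_1_iff)
  moreover have "a * d - b * c > 0"
    using norm(1) \<open>\<alpha> \<noteq> 0\<close> by (metis of_int_0_less_iff zero_less_norm_iff zero_less_power)
  ultimately have det: "a * d - b * c = 1"
    using pos_zmult_eq_1_iff by blast
  then have "(Re \<alpha>)\<^sup>2 + (Im \<alpha>)\<^sup>2 = 1"
    using norm(1) by (simp add: cmod_power2)
  moreover have "(Im \<alpha>)\<^sup>2 > 0"
    using assms(1) by simp
  ultimately have "(Re \<alpha>)\<^sup>2 < 1"
    by linarith
  then have "\<bar>of_int (a + d)\<bar> < (2::real)"
    using norm(2) by (simp add: abs_square_less_1)
  then have "a + d \<in> {-1, 0, 1}"
    by auto
  moreover have "\<alpha>\<^sup>2 = of_int (a + d) * \<alpha> - 1"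
    using root det by (simp add: algebra_simps)
  ultimately show ?thesis
    by (rule that[OF M det])
qed

end

section \<open>Counting the fixed points of a rotation of the torus\<close>

lemma int_matrix_image_iff:
  fixes A B C D m k :: int
  assumes "A * D - B * C \<noteq> 0"
  shows "(\<exists>u1 u2. m = A * u1 + C * u2 \<and> k = B * u1 + D * u2) \<longleftrightarrow>
         (A * D - B * C) dvd (D * m - C * k) \<and> (A * D - B * C) dvd (A * k - B * m)"
proof
  assume "\<exists>u1 u2. m = A * u1 + C * u2 \<and> k = B * u1 + D * u2"
  then obtain u1 u2 where "m = A * u1 + C * u2" "k = B * u1 + D * u2"
    by blast
  then have "D * m - C * k = (A * D - B * C) * u1" "A * k - B * m = (A * D - B * C) * u2"
    by (simp_all add: algebra_simps)
  then show "(A * D - B * C) dvd (D * m - C * k) \<and> (A * D - B * C) dvd (A * k - B * m)"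
    by simp
next
  let ?n = "A * D - B * C"
  assume "?n dvd (D * m - C * k) \<and> ?n dvd (A * k - B * m)"
  then obtain u1 u2 where u1: "D * m - C * k = ?n * u1" and u2: "A * k - B * m = ?n * u2"
    by (auto elim!: dvdE)
  have "?n * m = A * (D * m - C * k) + C * (A * k - B * m)"
    "?n * k = B * (D * m - C * k) + D * (A * k - B * m)"
    by (simp_all add: algebra_simps)
  then have "?n * m = ?n * (A * u1 + C * u2)" "?n * k = ?n * (B * u1 + D * u2)"
    unfolding u1 u2 by (simp_all add: algebra_simps)
  then show "\<exists>u1 u2. m = A * u1 + C * u2 \<and> k = B * u1 + D * u2"
    using assms by auto
qed

lemma prime_det_adjugate_row_dvd:
  fixes A B C D m k :: int
  assumes "prime (A * D - B * C)" "\<not> ((A * D - B * C) dvd D \<and> (A * D - B * C) dvd C)"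
    and "(A * D - B * C) dvd (D * m - C * k)"
  shows "(A * D - B * C) dvd (A * k - B * m)"
proof -
  let ?n = "A * D - B * C"
  have "D * (A * k - B * m) = ?n * k - B * (D * m - C * k)"
    "C * (A * k - B * m) = ?n * m - A * (D * m - C * k)"
    by (simp_all add: algebra_simps)
  then have "?n dvd D * (A * k - B * m)" "?n dvd C * (A * k - B * m)"
    using assms(3) by (metis dvd_diff dvd_mult dvd_triv_left)+
  then show ?thesis
    using assms(1,2) prime_dvd_mult_iff by blast
qed

text \<open>If the determinant \<open>n\<close> is prime, the adjugate has rank one modulo \<open>n\<close>, so a single
  row of it detects the image of the matrix.\<close>

lemma int_matrix_image_functional:
  fixes A B C D :: int
  assumes "A * D - B * C = 1 \<or> prime (A * D - B * C)"
  obtains r1 r2 where "\<forall>m k. (\<exists>u1 u2. m = A * u1 + C * u2 \<and> k = B * u1 + D * u2) \<longleftrightarrow>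
    (A * D - B * C) dvd (r1 * m + r2 * k)"
proof -
  define n where "n = A * D - B * C"
  have image: "(\<exists>u1 u2. m = A * u1 + C * u2 \<and> k = B * u1 + D * u2) \<longleftrightarrow>
      n dvd (D * m - C * k) \<and> n dvd (A * k - B * m)" for m k
    unfolding n_def using assms by (intro int_matrix_image_iff) auto
  consider "n = 1" | "prime n" "\<not> (n dvd D \<and> n dvd C)" | "prime n" "n dvd D" "n dvd C"
    using assms by (auto simp: n_def)
  then show ?thesis
  proof cases
    case 1
    then show ?thesis
      using that[of 0 0] image by (simp add: n_def)
  next
    case 2
    then have "n dvd (A * k - B * m)" if "n dvd (D * m - C * k)" for m k
      using prime_det_adjugate_row_dvd that unfolding n_def by blast
    then show ?thesis
      using that[of D "- C"] image unfolding n_def by auto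
  next
    case 3
    have "\<not> (n dvd A \<and> n dvd B)"
    proof
      assume "n dvd A \<and> n dvd B"
      with 3 have "n * n dvd n * 1"
        unfolding n_def by (metis dvd_diff mult_dvd_mono mult.commute mult_1_right)
      then show False
        using 3(1) by (metis dvd_mult_cancel_left not_prime_unit not_prime_0)
    qed
    then have "n dvd (D * m - C * k)" if "n dvd (A * k - B * m)" for m k
      using prime_det_adjugate_row_dvd[where A=D and B=C and C=B and D=A and m=k and k=m] 3(1) that
      unfolding n_def by (simp add: mult.commute)
    then show ?thesis
      using that[of "- B" A] image unfolding n_def by auto
  qed
qed

lemma funpow_affine:
  fixes \<alpha> \<beta> z :: "'a::comm_ring_1"
  shows "((\<lambda>z. \<alpha> * z + \<beta>) ^^ n) z = \<alpha> ^ n * z + (\<Sum>i<n. \<alpha> ^ i) * \<beta>"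
proof (induction n)
  case (Suc n)
  have "(\<Sum>i<Suc n. \<alpha> ^ i) = 1 + \<alpha> * (\<Sum>i<n. \<alpha> ^ i)"
    by (simp add: sum.lessThan_Suc_shift sum_distrib_left del: sum.lessThan_Suc)
  then show ?case
    using Suc by (simp add: algebra_simps)
qed simp

lemma funpow_affine_root_of_unity:
  fixes \<alpha> \<beta> z :: "'a::field"
  assumes "\<alpha> ^ n = 1" "\<alpha> \<noteq> 1"
  shows "((\<lambda>z. \<alpha> * z + \<beta>) ^^ n) z = z"
  using assms by (simp add: funpow_affine sum_gp_strict)

context complex_lattice
begin

lemma mult_int_combination:
  assumes "\<gamma> * w1 = of_int A * w1 + of_int B * w2" "\<gamma> * w2 = of_int C * w1 + of_int D * w2"
  shows "\<gamma> * (of_int u1 * w1 + of_int u2 * w2)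
      = of_int (A * u1 + C * u2) * w1 + of_int (B * u1 + D * u2) * w2"
proof -
  have "\<gamma> * (of_int u1 * w1 + of_int u2 * w2) = of_int u1 * (\<gamma> * w1) + of_int u2 * (\<gamma> * w2)"
    by (simp add: algebra_simps)
  then show ?thesis
    unfolding assms by (simp add: algebra_simps)
qed

text \<open>The kernel of multiplication by \<open>\<gamma>\<close> on \<open>\<complex>/L\<close> has as many elements as the index
  of \<open>\<gamma>L\<close> in \<open>L\<close>, namely the determinant of the matrix of \<open>\<gamma>\<close>.\<close>

lemma card_kernel_mult_le:
  fixes N :: nat
  assumes \<gamma>: "\<gamma> * w1 = of_int A * w1 + of_int B * w2" "\<gamma> * w2 = of_int C * w1 + of_int D * w2"
    and det: "A * D - B * C = 1 \<or> prime (A * D - B * C)"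
    and kernel: "\<And>i. i < N \<Longrightarrow> \<gamma> * y i \<in> L"
    and distinct: "\<And>i j. i < N \<Longrightarrow> j < N \<Longrightarrow> y i - y j \<in> L \<Longrightarrow> i = j"
  shows "N \<le> nat (A * D - B * C)"
proof -
  define n where "n = A * D - B * C"
  have "n > 0"
    using det prime_gt_0_int[of n] by (auto simp: n_def)
  have "\<gamma> \<noteq> 0"
  proof
    assume "\<gamma> = 0"
    then have "of_int A * w1 + of_int B * w2 = of_int 0 * w1 + of_int 0 * w2"
      "of_int C * w1 + of_int D * w2 = of_int 0 * w1 + of_int 0 * w2"
      using \<gamma> by simp_all
    then show False
      using \<open>n > 0\<close> unfolding int_combination_eq_iff by (simp add: n_def)
  qed
  obtain r1 r2 where r: "\<forall>m k. (\<exists>u1 u2. m = A * u1 + C * u2 \<and> k = B * u1 + D * u2) \<longleftrightarrow>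
      n dvd (r1 * m + r2 * k)"
    using int_matrix_image_functional[OF det] unfolding n_def .
  have "\<forall>i. \<exists>c. i < N \<longrightarrow> \<gamma> * y i = of_int (fst c) * w1 + of_int (snd c) * w2"
    using kernel unfolding lattice_iff by fastforce
  then obtain c where c: "\<And>i. i < N \<Longrightarrow> \<gamma> * y i = of_int (fst (c i)) * w1 + of_int (snd (c i)) * w2"
    by metis
  define \<phi> where "\<phi> i = (r1 * fst (c i) + r2 * snd (c i)) mod n" for i
  have "inj_on \<phi> {..<N}"
  proof (rule inj_onI)
    fix i j assume i: "i \<in> {..<N}" and j: "j \<in> {..<N}" and "\<phi> i = \<phi> j"
    then have "n dvd r1 * (fst (c i) - fst (c j)) + r2 * (snd (c i) - snd (c j))"
      unfolding \<phi>_def mod_eq_dvd_iff by (simp add: algebra_simps)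
    then obtain u1 u2 where u: "fst (c i) - fst (c j) = A * u1 + C * u2"
      "snd (c i) - snd (c j) = B * u1 + D * u2"
      using r by blast
    have "\<gamma> * (y i - y j) = of_int (fst (c i) - fst (c j)) * w1 + of_int (snd (c i) - snd (c j)) * w2"
      using c[of i] c[of j] i j by (simp add: right_diff_distrib algebra_simps)
    also have "\<dots> = \<gamma> * (of_int u1 * w1 + of_int u2 * w2)"
      unfolding mult_int_combination[OF \<gamma>] u ..
    finally have "y i - y j \<in> L"
      using \<open>\<gamma> \<noteq> 0\<close> by (simp add: lattice_comb)
    then show "i = j"
      using distinct i j by blast
  qed
  moreover have "\<phi> ` {..<N} \<subseteq> {0..<n}"
    using \<open>n > 0\<close> by (auto simp: \<phi>_def)
  ultimately have "card {..<N} \<le> card {0..<n}"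
    by (intro card_inj_on_le) auto
  then show ?thesis
    by (simp add: n_def)
qed

text \<open>The fixed points of \<open>z \<mapsto> \<alpha>z + \<beta>\<close> on \<open>\<complex>/L\<close> are a translate of the kernel of
  multiplication by \<open>1 - \<alpha>\<close>, whose determinant is \<open>|1 - \<alpha>|\<^sup>2 = 2 - (A + D)\<close>.\<close>

lemma card_fixed_points_le:
  fixes N :: nat
  assumes "\<alpha> * w1 = of_int A * w1 + of_int B * w2" "\<alpha> * w2 = of_int C * w1 + of_int D * w2"
    and "A * D - B * C = 1" "A + D \<in> {-1, 0, 1}"
    and fixed: "\<And>i. i < N \<Longrightarrow> \<alpha> * x i + \<beta> - x i \<in> L"
    and distinct: "\<And>i j. i < N \<Longrightarrow> j < N \<Longrightarrow> x i - x j \<in> L \<Longrightarrow> i = j"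
  shows "N \<le> nat (2 - (A + D))"
proof (cases "N = 0")
  case False
  have "(1 - A) * (1 - D) - (- B) * (- C) = 2 - (A + D)"
    using assms(3) by (simp add: algebra_simps)
  moreover have "2 - (A + D) = 1 \<or> prime (2 - (A + D))"
    using assms(4) by auto
  moreover have "(1 - \<alpha>) * w1 = of_int (1 - A) * w1 + of_int (- B) * w2"
    "(1 - \<alpha>) * w2 = of_int (- C) * w1 + of_int (1 - D) * w2"
    using assms(1,2) by (simp_all add: algebra_simps)
  moreover have "(1 - \<alpha>) * (x i - x 0) \<in> L" if "i < N" for i
  proof -
    have "(1 - \<alpha>) * (x i - x 0) = (\<alpha> * x 0 + \<beta> - x 0) - (\<alpha> * x i + \<beta> - x i)"
      by (simp add: algebra_simps)
    then show ?thesis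
      using lattice_diff[OF fixed[of 0] fixed[OF that]] False by simp
  qed
  ultimately show ?thesis
    using card_kernel_mult_le[of "1 - \<alpha>" "1 - A" "- B" "- C" "1 - D" N "\<lambda>i. x i - x 0"] distinct
    by auto
qed simp

lemma rotation_fixed_points_cases:
  fixes N :: nat
  assumes "\<alpha> * w1 = of_int A * w1 + of_int B * w2" "\<alpha> * w2 = of_int C * w1 + of_int D * w2"
    and "A * D - B * C = 1" "A + D \<in> {-1, 0, 1}" and root: "\<alpha>\<^sup>2 = of_int (A + D) * \<alpha> - 1"
    and fixed: "\<And>i. i < N \<Longrightarrow> \<alpha> * x i + \<beta> - x i \<in> L"
    and distinct: "\<And>i j. i < N \<Longrightarrow> j < N \<Longrightarrow> x i - x j \<in> L \<Longrightarrow> i = j"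
    and "N \<ge> 2"
  shows "(\<alpha> ^ 3 = 1 \<and> \<alpha> \<noteq> 1 \<and> N \<le> 3) \<or> (\<alpha> ^ 4 = 1 \<and> \<alpha> \<noteq> 1 \<and> N = 2)"
proof -
  have N: "N \<le> nat (2 - (A + D))"
    using card_fixed_points_le[OF assms(1-4) fixed distinct] .
  consider "A + D = -1" | "A + D = 0" | "A + D = 1"
    using assms(4) by auto
  then show ?thesis
  proof cases
    case 1
    then have "\<alpha>\<^sup>2 + \<alpha> + 1 = 0"
      using root by simp
    moreover have "\<alpha> ^ 3 - 1 = (\<alpha> - 1) * (\<alpha>\<^sup>2 + \<alpha> + 1)"
      by (simp add: algebra_simps power2_eq_square power3_eq_cube)
    ultimately have "\<alpha> ^ 3 = 1" "\<alpha> \<noteq> 1"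
      by auto
    then show ?thesis
      using N 1 by simp
  next
    case 2
    then have "\<alpha>\<^sup>2 = -1"
      using root by simp
    then have "\<alpha> ^ 4 = 1" "\<alpha> \<noteq> 1"
      by (auto simp: power4_eq_xxxx power2_eq_square[symmetric])
    then show ?thesis
      using N 2 \<open>N \<ge> 2\<close> by simp
  next
    case 3
    then show ?thesis
      using N \<open>N \<ge> 2\<close> by simp
  qed
qed

end

section \<open>Meromorphic functions on the plane\<close>

lemma meromorphic_on_UNIV_singularity:
  assumes "f meromorphic_on UNIV"
  shows "isolated_singularity_at f z" "not_essential f z"
  using assms meromorphic_on_subset[of f UNIV "{z}"] meromorphic_at_iff by auto

lemma meromorphic_frequently_nonzero:
  assumes mero: "f meromorphic_on UNIV" and "\<exists>\<^sub>F w in at z0. f w \<noteq> 0"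
  shows "\<exists>\<^sub>F w in at z. f w \<noteq> 0"
proof -
  have "eventually (\<lambda>z. f z = 0) (cosparse UNIV) \<or> eventually (\<lambda>z. f z \<noteq> 0) (cosparse UNIV)"
    by (rule meromorphic_imp_constant_or_avoid[OF mero]) auto
  moreover have "\<not> eventually (\<lambda>z. f z = 0) (cosparse UNIV)"
    using eventually_cosparse_imp_eventually_at[of "\<lambda>z. f z = 0" UNIV z0 UNIV] assms(2)
    by (auto simp: frequently_def)
  ultimately have "eventually (\<lambda>w. f w \<noteq> 0) (at z)"
    using eventually_cosparse_imp_eventually_at[of _ UNIV z UNIV] by auto
  then show ?thesis
    by (simp add: eventually_frequently)
qed

lemma meromorphic_on_UNIV_poles_sparse:
  assumes "f meromorphic_on UNIV"
  shows "{z. is_pole f z} sparse_in UNIV"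
  using meromorphic_on_imp_not_pole_cosparse[OF assms] by (simp add: eventually_cosparse)

lemma
  assumes "f meromorphic_on UNIV"
  shows open_not_poles: "open {z. \<not> is_pole f z}"
    and connected_not_poles: "connected {z. \<not> is_pole f z}"
    and remove_sings_holomorphic_not_poles: "remove_sings f holomorphic_on {z. \<not> is_pole f z}"
proof -
  note sparse = meromorphic_on_UNIV_poles_sparse[OF assms]
  have eq: "{z. \<not> is_pole f z} = UNIV - {z. is_pole f z}"
    by blast
  show "open {z. \<not> is_pole f z}"
    unfolding eq using sparse by (intro open_diff_sparse_pts) auto
  show "connected {z. \<not> is_pole f z}"
    unfolding eq using sparse by (intro sparse_imp_connected) auto
  have "remove_sings f analytic_on {z}" if "\<not> is_pole f z" for z
  proof (rule nicely_meromorphic_on_imp_analytic_at)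
    show "remove_sings f nicely_meromorphic_on UNIV"
      by (rule remove_sings_nicely_meromorphic[OF assms])
    show "\<not> is_pole (remove_sings f) z"
      using that meromorphic_on_UNIV_singularity(1)[OF assms] by simp
  qed auto
  then show "remove_sings f holomorphic_on {z. \<not> is_pole f z}"
    using analytic_imp_holomorphic analytic_on_analytic_at by blast
qed

lemma residue_free_closed_integral_0:
  assumes mero: "f meromorphic_on UNIV" and res: "\<And>z. is_pole f z \<Longrightarrow> residue f z = 0"
    and \<gamma>: "valid_path \<gamma>" "pathfinish \<gamma> = pathstart \<gamma>" "path_image \<gamma> \<subseteq> {z. \<not> is_pole f z}"
  shows "(remove_sings f has_contour_integral 0) \<gamma>"
proof -
  let ?g = "remove_sings f"
  obtain R where R: "path_image \<gamma> \<subseteq> ball 0 R"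
    using \<gamma>(1) by (meson bounded_subset_ballD compact_imp_bounded compact_path_image
        valid_path_imp_path)
  define pts where "pts = ball 0 R \<inter> {z. is_pole f z}"
  have "finite (cball 0 R \<inter> {z. is_pole f z})"
    using meromorphic_on_UNIV_poles_sparse[OF mero]
    by (intro sparse_in_compact_finite) (auto intro: sparse_in_subset)
  then have "finite pts"
    unfolding pts_def by (rule finite_subset[rotated]) auto
  have img: "path_image \<gamma> \<subseteq> ball 0 R - pts"
    using R \<gamma>(3) by (auto simp: pts_def)
  have hol: "?g holomorphic_on ball 0 R - pts"
    by (rule holomorphic_on_subset[OF remove_sings_holomorphic_not_poles[OF mero]])
       (auto simp: pts_def)
  have "contour_integral \<gamma> ?g = 2 * pi * \<i> * (\<Sum>p\<in>pts. winding_number \<gamma> p * residue ?g p)"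
  proof (rule Residue_theorem[OF open_ball connected_ball \<open>finite pts\<close> hol \<gamma>(1,2)])
    show "path_image \<gamma> \<subseteq> ball 0 R - pts"
      by (rule img)
    show "\<forall>z. z \<notin> ball 0 R \<longrightarrow> winding_number \<gamma> z = 0"
      using winding_number_zero_outside[OF valid_path_imp_path[OF \<gamma>(1)] convex_ball \<gamma>(2) _ R]
      by blast
  qed
  also have "\<dots> = 0"
    using res meromorphic_on_UNIV_singularity(1)[OF mero] by (simp add: pts_def)
  finally have "contour_integral \<gamma> ?g = 0" .
  moreover have "?g contour_integrable_on \<gamma>"
    using open_Diff[OF open_ball finite_imp_closed[OF \<open>finite pts\<close>]]
    by (rule contour_integrable_holomorphic_simple[OF hol _ \<gamma>(1) img])
  ultimately show ?thesis
    using has_contour_integral_integral by fastforce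
qed

lemma closed_integrals_0_imp_path_independent:
  assumes S: "open S" and hol: "g holomorphic_on S"
    and closed: "\<And>\<gamma>. valid_path \<gamma> \<Longrightarrow> pathfinish \<gamma> = pathstart \<gamma> \<Longrightarrow> path_image \<gamma> \<subseteq> S \<Longrightarrow>
      (g has_contour_integral 0) \<gamma>"
    and \<gamma>: "valid_path \<gamma>1" "valid_path \<gamma>2" "path_image \<gamma>1 \<subseteq> S" "path_image \<gamma>2 \<subseteq> S"
      "pathstart \<gamma>1 = pathstart \<gamma>2" "pathfinish \<gamma>1 = pathfinish \<gamma>2"
  shows "contour_integral \<gamma>1 g = contour_integral \<gamma>2 g"
proof -
  have "(g has_contour_integral contour_integral \<gamma>i g) \<gamma>i"
    if "valid_path \<gamma>i" "path_image \<gamma>i \<subseteq> S" for \<gamma>i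
    using contour_integrable_holomorphic_simple[OF hol S that] has_contour_integral_integral by blast
  then have "(g has_contour_integral (contour_integral \<gamma>1 g + - contour_integral \<gamma>2 g))
      (\<gamma>1 +++ reversepath \<gamma>2)"
    using \<gamma> by (intro has_contour_integral_join has_contour_integral_reversepath) auto
  moreover have "(g has_contour_integral 0) (\<gamma>1 +++ reversepath \<gamma>2)"
    using \<gamma> by (intro closed valid_path_join) (auto simp: path_image_join)
  ultimately show ?thesis
    using has_contour_integral_unique by fastforce
qed

lemma primitive_if_closed_integrals_0:
  assumes S: "open S" "connected S" and hol: "g holomorphic_on S"
    and closed: "\<And>\<gamma>. valid_path \<gamma> \<Longrightarrow> pathfinish \<gamma> = pathstart \<gamma> \<Longrightarrow> path_image \<gamma> \<subseteq> S \<Longrightarrow>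
      (g has_contour_integral 0) \<gamma>"
  obtains F where "\<And>z. z \<in> S \<Longrightarrow> (F has_field_derivative g z) (at z)"
proof (cases "S = {}")
  case False
  then obtain a where "a \<in> S"
    by blast
  define pth where
    "pth z = (SOME p. polynomial_function p \<and> path_image p \<subseteq> S \<and> pathstart p = a \<and> pathfinish p = z)"
    for z
  have pth: "valid_path (pth z) \<and> path_image (pth z) \<subseteq> S \<and> pathstart (pth z) = a \<and> pathfinish (pth z) = z"
    if "z \<in> S" for z
    using someI_ex[OF connected_open_polynomial_connected[OF S(1,2) \<open>a \<in> S\<close> that]]
      valid_path_polynomial_function unfolding pth_def by blast
  define F where "F z = contour_integral (pth z) g" for z
  have "(F has_field_derivative g x) (at x)" if "x \<in> S" for x
  proof -
    obtain d where d: "d > 0" "ball x d \<subseteq> S"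
      using S(1) \<open>x \<in> S\<close> open_contains_ball by blast
    obtain G where G: "\<And>y. y \<in> ball x d \<Longrightarrow> (G has_field_derivative g y) (at y within ball x d)"
      using holomorphic_convex_primitive'[OF convex_ball open_ball holomorphic_on_subset[OF hol d(2)]]
      by blast
    have F_local: "F y = F x + (G y - G x)" if y: "y \<in> ball x d" for y
    proof -
      have seg: "closed_segment x y \<subseteq> ball x d"
        using y d(1) by (intro closed_segment_subset convex_ball) auto
      have line: "(g has_contour_integral (G y - G x)) (linepath x y)"
        using contour_integral_primitive[OF G, of "linepath x y"] seg by simp
      have "F y = contour_integral (pth x +++ linepath x y) g"
        unfolding F_def using pth[OF \<open>x \<in> S\<close>] pth[of y] y d seg
        by (intro closed_integrals_0_imp_path_independent[OF S(1) hol closed]) (auto simp: path_image_join)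
      also have "\<dots> = F x + (G y - G x)"
        unfolding F_def using pth[OF \<open>x \<in> S\<close>] line
        by (subst contour_integral_join)
           (auto intro: contour_integrable_holomorphic_simple[OF hol S(1)] contour_integral_unique
             has_contour_integral_integrable)
      finally show ?thesis .
    qed
    have "(G has_field_derivative g x) (at x)"
      using G[of x] d(1) at_within_open[of x "ball x d"] by simp
    then have "((\<lambda>y. F x + (G y - G x)) has_field_derivative 0 + (g x - 0)) (at x)"
      by (intro DERIV_add DERIV_diff DERIV_const)
    then have "((\<lambda>y. F x + (G y - G x)) has_field_derivative g x) (at x)"
      by simp
    then show ?thesis
      by (rule has_field_derivative_transform_within_open[where S="ball x d"])
         (simp_all add: d(1) F_local[symmetric])
  qed
  then show ?thesis
    using that by blast
qed (use that in blast)

text \<open>Only the reflection \<open>z \<mapsto> \<beta> - z\<close> forces the periods of the primitive to vanish: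
  it turns the period \<open>c\<close> into \<open>-c\<close>.\<close>

lemma primitive_periodic_if_odd:
  fixes F g :: "complex \<Rightarrow> complex"
  assumes S: "open S" "connected S"
    and F: "\<And>z. z \<in> S \<Longrightarrow> (F has_field_derivative g z) (at z)"
    and shift_S: "\<And>z. z + l \<in> S \<longleftrightarrow> z \<in> S" and reflect_S: "\<And>z. \<beta> - z \<in> S \<longleftrightarrow> z \<in> S"
    and shift_g: "\<And>z. g (z + l) = g z" and reflect_g: "\<And>z. g (\<beta> - z) = - g z"
    and "z \<in> S"
  shows "F (z + l) = F z"
proof -
  have const: "\<exists>c. \<forall>w\<in>S. \<phi> w = c"
    if "\<And>w. w \<in> S \<Longrightarrow> (\<phi> has_field_derivative 0) (at w)" for \<phi>
  proof -
    have "continuous_on S \<phi>"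
      using that by (meson DERIV_isCont continuous_at_imp_continuous_on)
    then show ?thesis
      using DERIV_zero_connected_constant[OF S(2,1), of "{}" \<phi>] that by blast
  qed
  have "((\<lambda>w. F (w + l) - F w) has_field_derivative g (w + l) - g w) (at w)" if "w \<in> S" for w
    using F[of "w + l"] F[OF that] that shift_S by (intro DERIV_diff) (simp_all add: DERIV_shift)
  then obtain c where c: "\<And>w. w \<in> S \<Longrightarrow> F (w + l) - F w = c"
    using const[of "\<lambda>w. F (w + l) - F w"] shift_g by auto
  have "((\<lambda>w. F (\<beta> - w) - F w) has_field_derivative g (\<beta> - w) * -1 - g w) (at w)"
    if "w \<in> S" for w
  proof (intro DERIV_diff DERIV_chain2[of F] F)
    show "\<beta> - w \<in> S" "w \<in> S"
      using that reflect_S by auto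
  qed (auto intro!: derivative_eq_intros)
  then obtain K where K: "\<And>w. w \<in> S \<Longrightarrow> F (\<beta> - w) - F w = K"
    using const[of "\<lambda>w. F (\<beta> - w) - F w"] reflect_g by auto
  have "K = - K"
    using K[OF \<open>z \<in> S\<close>] K[of "\<beta> - z"] \<open>z \<in> S\<close> reflect_S by force
  then have even: "\<And>w. w \<in> S \<Longrightarrow> F (\<beta> - w) = F w"
    using K by simp
  have "z - l \<in> S" "\<beta> - z \<in> S"
    using \<open>z \<in> S\<close> shift_S[of "z - l"] reflect_S by auto
  then have "F (z - l) = F z + c"
    using even c[of "\<beta> - z"] even[of "z - l"] even[OF \<open>z \<in> S\<close>] by (simp add: algebra_simps)
  moreover have "F z = F (z - l) + c"
    using c[OF \<open>z - l \<in> S\<close>] by (simp add: algebra_simps)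
  ultimately have "c = 0"
    by simp
  then show ?thesis
    using c[OF \<open>z \<in> S\<close>] by simp
qed

lemma norm_bounds_continuous_nonzero:
  fixes G :: "complex \<Rightarrow> complex"
  assumes "compact K" "continuous_on K G" "\<And>w. w \<in> K \<Longrightarrow> G w \<noteq> 0"
  obtains c M where "c > 0" "\<And>w. w \<in> K \<Longrightarrow> c \<le> norm (G w) \<and> norm (G w) \<le> M"
proof (cases "K = {}")
  case False
  obtain M where M: "\<And>w. w \<in> K \<Longrightarrow> norm (G w) \<le> M"
    using compact_imp_bounded[OF compact_continuous_image[OF assms(2,1)]]
    unfolding bounded_iff by blast
  obtain x where x: "x \<in> K" "\<And>y. y \<in> K \<Longrightarrow> norm (G x) \<le> norm (G y)"
    using continuous_attains_inf[OF assms(1) False continuous_on_norm[OF assms(2)]] by blast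
  show ?thesis
    using that[of "norm (G x)" M] x M assms(3) by auto
qed (use that[of 1] in auto)

lemma zorder_norm_bounds:
  fixes f :: "complex \<Rightarrow> complex"
  assumes "isolated_singularity_at f z" "not_essential f z" "\<exists>\<^sub>F w in at z. f w \<noteq> 0"
  obtains r c M where "r > 0" "c > 0" "f holomorphic_on ball z r - {z}"
    and "\<And>w. w \<in> ball z r - {z} \<Longrightarrow>
      c * norm (w - z) powi zorder f z \<le> norm (f w) \<and> norm (f w) \<le> M * norm (w - z) powi zorder f z"
proof -
  define G where "G = zor_poly f z"
  obtain r where r: "r > 0" "G holomorphic_on cball z r"
    and fG: "\<And>w. w \<in> cball z r - {z} \<Longrightarrow> f w = G w * (w - z) powi zorder f z \<and> G w \<noteq> 0"
    and "G z \<noteq> 0"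
    using zorder_exist[OF assms] unfolding G_def by blast
  obtain c M where c: "c > 0" and bounds: "\<And>w. w \<in> cball z r \<Longrightarrow> c \<le> norm (G w) \<and> norm (G w) \<le> M"
    using norm_bounds_continuous_nonzero[of "cball z r" G] r(2) fG \<open>G z \<noteq> 0\<close>
    by (metis Diff_iff compact_cball holomorphic_on_imp_continuous_on singletonD)
  have "f holomorphic_on ball z r - {z}"
  proof (rule holomorphic_transform)
    show "(\<lambda>w. G w * (w - z) powi zorder f z) holomorphic_on ball z r - {z}"
      by (intro holomorphic_intros holomorphic_on_subset[OF r(2)]) auto
  qed (use fG in auto)
  moreover have "c * norm (w - z) powi zorder f z \<le> norm (f w) \<and>
      norm (f w) \<le> M * norm (w - z) powi zorder f z" if "w \<in> ball z r - {z}" for w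
    using fG[of w] bounds[of w] that by (auto simp: norm_mult norm_power_int intro: mult_right_mono)
  ultimately show ?thesis
    using that r(1) c by blast
qed

lemma norm_diff_le_of_deriv_power_bound:
  fixes F F' :: "complex \<Rightarrow> complex"
  assumes deriv: "\<And>u. u \<in> ball z r \<Longrightarrow> (F has_field_derivative F' u) (at u)"
    and bound: "\<And>u. u \<in> ball z r \<Longrightarrow> norm (F' u) \<le> M * norm (u - z) ^ k"
    and w: "w \<in> ball z r"
  shows "norm (F w - F z) \<le> M * norm (w - z) ^ Suc k"
proof (cases "w = z")
  case False
  have "r > 0"
    using w unfolding mem_ball by (meson zero_le_dist le_less_trans)
  then have seg: "closed_segment z w \<subseteq> ball z r"
    using w by (intro closed_segment_subset convex_ball) auto
  have "0 \<le> M * norm (w - z) ^ k"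
    using bound[OF w] norm_ge_zero order_trans by blast
  moreover have "norm (w - z) ^ k > 0"
    using False by simp
  ultimately have "M \<ge> 0"
    by (simp add: zero_le_mult_iff)
  have "norm (F w - F z) \<le> M * norm (w - z) ^ k * norm (w - z)"
  proof (rule field_differentiable_bound[OF convex_closed_segment])
    fix u assume u: "u \<in> closed_segment z w"
    have "u \<in> ball z r"
      using seg u by blast
    then show "(F has_field_derivative F' u) (at u within closed_segment z w)"
      by (rule has_field_derivative_at_within[OF deriv])
    have "norm (u - z) ^ k \<le> norm (w - z) ^ k"
      using segment_bound1[OF u] by (intro power_mono) auto
    then show "norm (F' u) \<le> M * norm (w - z) ^ k"
      using bound[OF \<open>u \<in> ball z r\<close>] \<open>M \<ge> 0\<close> by (meson mult_left_mono order_trans)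
  qed auto
  then show ?thesis
    by (simp add: mult_ac)
qed simp

text \<open>Integrating the derivative radially from the circle of radius \<open>r/2\<close> inwards.\<close>

lemma radial_segment_annulus:
  fixes z w :: complex
  assumes "0 < norm (w - z)" "norm (w - z) \<le> R"
  obtains v where "norm (v - z) = R" "norm (w - v) \<le> R"
    and "\<forall>u\<in>closed_segment w v. norm (w - z) \<le> norm (u - z) \<and> norm (u - z) \<le> R"
proof -
  define \<rho> where "\<rho> = norm (w - z)"
  define q where "q = R / \<rho>"
  define v where "v = z + of_real q * (w - z)"
  have "\<rho> > 0" "q \<ge> 1" "q * \<rho> = R"
    using assms(1,2) by (simp_all add: q_def \<rho>_def field_simps)
  have "norm (v - z) = R"
    using \<open>q \<ge> 1\<close> \<open>q * \<rho> = R\<close> by (simp add: v_def norm_mult \<rho>_def)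
  have "w - v = of_real (1 - q) * (w - z)"
    by (simp add: v_def algebra_simps)
  then have "norm (w - v) = \<bar>1 - q\<bar> * \<rho>"
    by (simp only: norm_mult norm_of_real \<rho>_def)
  then have "norm (w - v) = q * \<rho> - \<rho>"
    using \<open>q \<ge> 1\<close> by (simp add: algebra_simps)
  then have "norm (w - v) \<le> R"
    using \<open>q * \<rho> = R\<close> \<open>\<rho> > 0\<close> by linarith
  have "\<rho> \<le> norm (u - z) \<and> norm (u - z) \<le> R" if u: "u \<in> closed_segment w v" for u
  proof -
    obtain t where t: "0 \<le> t" "t \<le> 1" "u = (1 - t) *\<^sub>R w + t *\<^sub>R v"
      using u unfolding closed_segment_def by blast
    define s where "s = 1 + t * (q - 1)"
    have "0 \<le> t * (q - 1)" "t * (q - 1) \<le> q - 1"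
      using t \<open>q \<ge> 1\<close> by (simp_all add: mult_left_le_one_le)
    then have s: "1 \<le> s" "s \<le> q"
      by (simp_all add: s_def)
    have "u - z = of_real s * (w - z)"
      by (simp add: t(3) v_def s_def scaleR_conv_of_real algebra_simps)
    then have "norm (u - z) = \<bar>s\<bar> * \<rho>"
      by (simp only: norm_mult norm_of_real \<rho>_def)
    then have "norm (u - z) = s * \<rho>"
      using s by simp
    moreover have "\<rho> \<le> s * \<rho>" "s * \<rho> \<le> q * \<rho>"
      using s \<open>\<rho> > 0\<close> by (simp_all add: mult_right_mono)
    ultimately show ?thesis
      using \<open>q * \<rho> = R\<close> by (intro conjI) linarith+
  qed
  then show ?thesis
    using that \<open>norm (v - z) = R\<close> \<open>norm (w - v) \<le> R\<close> by (simp add: \<rho>_def)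
qed

lemma norm_le_of_deriv_power_bound_punctured:
  fixes F F' :: "complex \<Rightarrow> complex"
  assumes "r > 0" and deriv: "\<And>u. u \<in> ball z r - {z} \<Longrightarrow> (F has_field_derivative F' u) (at u)"
    and bound: "\<And>u. u \<in> ball z r - {z} \<Longrightarrow> norm (F' u) \<le> M / norm (u - z) ^ k"
  obtains C where "\<forall>w\<in>ball z (r/2) - {z}. norm (F w) \<le> C / norm (w - z) ^ k"
proof -
  have "continuous_on (ball z r - {z}) F"
    using deriv by (meson DERIV_isCont continuous_at_imp_continuous_on)
  moreover have "sphere z (r/2) \<subseteq> ball z r - {z}"
    using \<open>r > 0\<close> by auto
  ultimately have "continuous_on (sphere z (r/2)) F"
    by (rule continuous_on_subset)
  then have "bounded (F ` sphere z (r/2))"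
    by (intro compact_imp_bounded compact_continuous_image compact_sphere)
  then obtain C0 where C0: "\<And>u. u \<in> sphere z (r/2) \<Longrightarrow> norm (F u) \<le> C0"
    unfolding bounded_iff by blast
  have "norm (F w) \<le> (C0 * (r/2) ^ k + M * (r/2)) / norm (w - z) ^ k"
    if w: "w \<in> ball z (r/2) - {z}" for w
  proof -
    define \<rho> where "\<rho> = norm (w - z)"
    have \<rho>: "0 < \<rho>" "\<rho> \<le> r/2"
      using w by (auto simp: \<rho>_def dist_norm norm_minus_commute)
    obtain v where annulus: "norm (v - z) = r/2" "norm (w - v) \<le> r/2"
      "\<forall>u\<in>closed_segment w v. \<rho> \<le> norm (u - z) \<and> norm (u - z) \<le> r/2"
      using radial_segment_annulus[OF \<rho>[unfolded \<rho>_def]] unfolding \<rho>_def .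
    have "v \<in> sphere z (r/2)"
      using annulus(1) by (simp add: dist_norm norm_minus_commute)
    have segment: "u \<in> ball z r - {z}" "\<rho> \<le> norm (u - z)" if "u \<in> closed_segment w v" for u
      using annulus(3) that \<rho> \<open>r > 0\<close> by (auto simp: dist_norm norm_minus_commute)
    have "0 \<le> M / \<rho> ^ k"
      using bound[of w] w segment[of w] by (simp add: \<rho>_def) (meson norm_ge_zero order_trans)
    moreover have "\<rho> ^ k > 0"
      using \<rho> by simp
    ultimately have "M \<ge> 0"
      by (simp add: zero_le_divide_iff)
    have "norm (F w - F v) \<le> M / \<rho> ^ k * norm (w - v)"
    proof (rule field_differentiable_bound[OF convex_closed_segment])
      fix u assume u: "u \<in> closed_segment w v"
      show "(F has_field_derivative F' u) (at u within closed_segment w v)"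
        using segment[OF u] by (intro has_field_derivative_at_within[OF deriv])
      have "\<rho> ^ k \<le> norm (u - z) ^ k"
        using segment[OF u] \<rho> by (intro power_mono) auto
      moreover have "0 < norm (u - z) ^ k * \<rho> ^ k"
        using segment[OF u] \<rho> by simp
      ultimately have "M / norm (u - z) ^ k \<le> M / \<rho> ^ k"
        by (rule divide_left_mono[OF _ \<open>M \<ge> 0\<close>])
      then show "norm (F' u) \<le> M / \<rho> ^ k"
        using bound segment[OF u] order_trans by blast
    qed auto
    then have "norm (F w - F v) \<le> M / \<rho> ^ k * (r/2)"
      using annulus(2) \<open>0 \<le> M / \<rho> ^ k\<close> by (meson mult_left_mono order_trans)
    moreover have "norm (F w) \<le> norm (F w - F v) + norm (F v)"
      using norm_triangle_ineq[of "F w - F v" "F v"] by simp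
    moreover have "C0 \<le> C0 * (r/2) ^ k / \<rho> ^ k"
    proof -
      have "C0 \<ge> 0"
        using C0[OF \<open>v \<in> _\<close>] norm_ge_zero order_trans by blast
      moreover have "\<rho> ^ k \<le> (r/2) ^ k"
        using \<rho> by (intro power_mono) auto
      ultimately have "C0 * \<rho> ^ k \<le> C0 * (r/2) ^ k"
        by (simp add: mult_left_mono)
      then show ?thesis
        using \<rho> by (simp add: field_simps)
    qed
    ultimately have "norm (F w) \<le> C0 * (r/2) ^ k / \<rho> ^ k + M / \<rho> ^ k * (r/2)"
      using C0[OF \<open>v \<in> _\<close>] by linarith
    then show ?thesis
      by (simp add: \<rho>_def add_divide_distrib)
  qed
  then show ?thesis
    using that by blast
qed

lemma norm_le_of_eventually_le:
  fixes g :: "complex \<Rightarrow> complex"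
  assumes "isCont g z" "isCont \<psi> z" "\<forall>\<^sub>F w in at z. norm (g w) \<le> \<psi> w"
  shows "norm (g z) \<le> \<psi> z"
proof (rule tendsto_le[OF trivial_limit_at _ _ assms(3)])
  show "\<psi> \<midarrow>z\<rightarrow> \<psi> z" "(\<lambda>w. norm (g w)) \<midarrow>z\<rightarrow> norm (g z)"
    using assms(1,2) by (auto intro!: tendsto_intros simp: isCont_def)
qed

lemma not_locally_constant_if_deriv_nonzero:
  assumes "\<forall>\<^sub>F w in at z. (F has_field_derivative F' w) (at w) \<and> F' w \<noteq> 0 \<and> F w = c"
  shows False
proof -
  obtain d where d: "d > 0"
    and near: "\<And>w. w \<in> ball z d - {z} \<Longrightarrow> (F has_field_derivative F' w) (at w) \<and> F' w \<noteq> 0 \<and> F w = c"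
    using assms unfolding eventually_at by (auto simp: dist_commute)
  define w where "w = z + of_real (d / 2)"
  have w: "w \<in> ball z d - {z}"
    using d by (simp add: w_def dist_norm)
  have "((\<lambda>_. c) has_field_derivative 0) (at w)"
    by simp
  then have "(F has_field_derivative 0) (at w)"
    by (rule has_field_derivative_transform_within_open[where S="ball z d - {z}"])
       (use w near in auto)
  then show False
    using near[OF w] DERIV_unique by blast
qed

lemma filtermap_at_affine:
  fixes \<alpha> \<beta> z :: complex
  assumes "\<alpha> \<noteq> 0"
  shows "filtermap (\<lambda>w. \<alpha> * w + \<beta>) (at z) = at (\<alpha> * z + \<beta>)"
proof -
  have lim: "filterlim (\<lambda>w. a * w + b) (at (a * x + b)) (at x)" if "a \<noteq> 0" for a b x :: complex
  proof (rule filterlim_atI)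
    show "((\<lambda>w. a * w + b) \<longlongrightarrow> a * x + b) (at x)"
      by (intro tendsto_intros)
    show "\<forall>\<^sub>F w in at x. a * w + b \<noteq> a * x + b"
      using that by (auto simp: eventually_at_filter)
  qed
  have "at (\<alpha> * z + \<beta>) = filtermap (\<lambda>w. \<alpha> * w + \<beta>) (filtermap (\<lambda>w. w / \<alpha> - \<beta> / \<alpha>) (at (\<alpha> * z + \<beta>)))"
    using assms by (simp add: filtermap_filtermap field_simps)
  also have "\<dots> \<le> filtermap (\<lambda>w. \<alpha> * w + \<beta>) (at z)"
  proof (intro filtermap_mono)
    have "(\<lambda>w. 1 / \<alpha> * w + - \<beta> / \<alpha>) = (\<lambda>w. w / \<alpha> - \<beta> / \<alpha>)" "1 / \<alpha> * (\<alpha> * z + \<beta>) + - \<beta> / \<alpha> = z"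
      using assms by (auto simp: field_simps)
    then show "filtermap (\<lambda>w. w / \<alpha> - \<beta> / \<alpha>) (at (\<alpha> * z + \<beta>)) \<le> at z"
      using lim[of "1 / \<alpha>" "- \<beta> / \<alpha>" "\<alpha> * z + \<beta>"] assms by (simp add: filterlim_def)
  qed
  finally show ?thesis
    using lim[OF assms, of \<beta> z] by (simp add: filterlim_def antisym)
qed

lemma filtermap_at_translate: "filtermap (\<lambda>w. w + l) (at z) = at (z + l :: complex)"
  using filtermap_at_affine[of 1 l z] by simp

lemma filtermap_at_reflect: "filtermap (\<lambda>w. b - w) (at z) = at (b - z :: complex)"
  using filtermap_at_affine[of "-1" b z] by simp

lemma remove_sings_cmult: "remove_sings (\<lambda>w. c * f w) z = c * remove_sings f z"
proof (cases "c = 0")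
  case False
  show ?thesis
  proof (cases "\<exists>L. f \<midarrow>z\<rightarrow> L")
    case True
    then obtain L where "f \<midarrow>z\<rightarrow> L"
      by blast
    then show ?thesis
      by (metis remove_sings_eqI tendsto_mult_left)
  next
    case nolim: False
    have "\<not> (\<lambda>w. c * f w) \<midarrow>z\<rightarrow> L" for L
    proof
      assume "(\<lambda>w. c * f w) \<midarrow>z\<rightarrow> L"
      then have "(\<lambda>w. inverse c * (c * f w)) \<midarrow>z\<rightarrow> inverse c * L"
        by (rule tendsto_mult_left)
      then have "f \<midarrow>z\<rightarrow> inverse c * L"
        using False by (simp add: mult.assoc[symmetric])
      with nolim show False
        by blast
    qed
    with nolim show ?thesis
      by (simp add: remove_sings_def)
  qed
qed (simp add: remove_sings_eqI)

lemma remove_sings_entire_if_locally_bounded: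
  assumes analytic: "\<And>z. \<forall>\<^sub>F w in at z. h analytic_on {w}"
    and bounded: "\<And>z. \<exists>B. \<forall>\<^sub>F w in at z. norm (h w) \<le> B"
  shows "remove_sings h holomorphic_on UNIV"
proof -
  have "remove_sings h analytic_on {z}" for z
  proof -
    obtain r where r: "r > 0" "\<And>w. w \<in> ball z r - {z} \<Longrightarrow> h analytic_on {w}"
      using analytic[of z] unfolding eventually_at by (auto simp: dist_commute)
    then have hol: "h holomorphic_on ball z r - {z}"
      using analytic_imp_holomorphic analytic_on_analytic_at by blast
    then obtain G where G: "G holomorphic_on ball z r" "\<And>w. w \<in> ball z r - {z} \<Longrightarrow> G w = h w"
      using holomorphic_on_extend_bounded[OF hol] bounded[of z] r(1) by auto
    have "isCont G z"
      using G(1) r(1) holomorphic_on_imp_continuous_on continuous_on_eq_continuous_at[OF open_ball]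
      by (metis centre_in_ball)
    then have "G \<midarrow>z\<rightarrow> G z"
      by (simp add: isCont_def)
    moreover have "\<forall>\<^sub>F w in at z. G w = h w"
      using G(2) eventually_at_ball'[OF r(1), of z UNIV] by (auto elim: eventually_mono)
    ultimately have lim: "h \<midarrow>z\<rightarrow> G z"
      by (rule Lim_transform_eventually)
    have "h analytic_on ball z r - {z}"
      using r(2) analytic_on_analytic_at by blast
    then have "isolated_singularity_at h z"
      unfolding isolated_singularity_at_def using r(1) by blast
    then show ?thesis
      using lim by (rule remove_sings_analytic_at)
  qed
  then show ?thesis
    using analytic_imp_holomorphic analytic_on_analytic_at by blast
qed

section \<open>Residue-free elliptic functions that are odd under a reflection\<close>

locale odd_elliptic_form = complex_lattice +
  fixes f :: "complex \<Rightarrow> complex" and \<beta> :: complex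
  assumes periodic_meromorphic: "lattice_periodic_meromorphic L f"
    and frequently_nonzero: "\<And>z. \<exists>\<^sub>F w in at z. f w \<noteq> 0"
    and residue_at_pole: "\<And>z. is_pole f z \<Longrightarrow> residue f z = 0"
    and odd: "\<And>z. \<forall>\<^sub>F w in at z. f (\<beta> - w) = - f w"
begin

definition "g = remove_sings f"

lemma meromorphic: "f meromorphic_on UNIV"
  using periodic_meromorphic unfolding lattice_periodic_meromorphic_def by blast

lemma periodic: "l \<in> L \<Longrightarrow> \<forall>\<^sub>F w in at z. f (w + l) = f w"
  using periodic_meromorphic unfolding lattice_periodic_meromorphic_def by blast

lemma is_pole_shift: "l \<in> L \<Longrightarrow> is_pole f (z + l) \<longleftrightarrow> is_pole f z"
  using is_pole_compose_iff[OF filtermap_at_translate[of l z], of f] is_pole_cong[OF periodic refl]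
  by (simp add: comp_def)

lemma is_pole_reflect: "is_pole f (\<beta> - z) \<longleftrightarrow> is_pole f z"
  using is_pole_compose_iff[OF filtermap_at_reflect[of \<beta> z], of f] is_pole_cong[OF odd refl]
  by (simp add: comp_def)

lemma g_shift: "l \<in> L \<Longrightarrow> g (z + l) = g z"
  using remove_sings_compose[OF filtermap_at_translate[of l z], of f] remove_sings_cong[OF periodic refl]
  by (simp add: g_def comp_def)

lemma g_reflect: "g (\<beta> - z) = - g z"
  using remove_sings_compose[OF filtermap_at_reflect[of \<beta> z], of f] remove_sings_cong[OF odd refl]
    remove_sings_cmult[of "-1" f z]
  by (simp add: g_def comp_def)

lemma periodic_primitive:
  obtains F where "\<forall>z. \<not> is_pole f z \<longrightarrow> (F has_field_derivative g z) (at z)"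
    and "\<forall>z. \<forall>l\<in>L. \<not> is_pole f z \<longrightarrow> F (z + l) = F z"
proof -
  note S = open_not_poles[OF meromorphic] connected_not_poles[OF meromorphic]
  obtain F where F: "\<And>z. z \<in> {z. \<not> is_pole f z} \<Longrightarrow> (F has_field_derivative g z) (at z)"
    using primitive_if_closed_integrals_0[OF S remove_sings_holomorphic_not_poles[OF meromorphic]]
      residue_free_closed_integral_0[OF meromorphic residue_at_pole]
    unfolding g_def by blast
  have "F (z + l) = F z" if "l \<in> L" "\<not> is_pole f z" for z l
    by (rule primitive_periodic_if_odd[OF S F])
       (use that is_pole_shift is_pole_reflect g_shift g_reflect in auto)
  with F show ?thesis
    using that by blast
qed

lemma g_local_bounds:
  obtains r c M where "r > 0" "c > 0"
    and "\<forall>w\<in>ball z r - {z}. \<not> is_pole f w \<and>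
      c * norm (w - z) powi zorder f z \<le> norm (g w) \<and> norm (g w) \<le> M * norm (w - z) powi zorder f z"
proof -
  note iso = meromorphic_on_UNIV_singularity(1)[OF meromorphic]
  have "\<forall>\<^sub>F w in at z. g w = f w"
    unfolding g_def by (rule eventually_remove_sings_eq_at[OF iso])
  with frequently_nonzero[of z] have "\<exists>\<^sub>F w in at z. f w \<noteq> 0 \<and> g w = f w"
    by (rule frequently_eventually_frequently)
  then have "\<exists>\<^sub>F w in at z. g w \<noteq> 0"
    by (rule frequently_elim1) auto
  moreover have "isolated_singularity_at g z" "not_essential g z" "zorder g z = zorder f z"
    using iso meromorphic_on_UNIV_singularity(2)[OF meromorphic] by (auto simp: g_def)
  ultimately obtain r c M where r: "r > 0" "c > 0" "g holomorphic_on ball z r - {z}"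
    and bounds: "\<And>w. w \<in> ball z r - {z} \<Longrightarrow>
      c * norm (w - z) powi zorder f z \<le> norm (g w) \<and> norm (g w) \<le> M * norm (w - z) powi zorder f z"
    using zorder_norm_bounds[of g z] by metis
  have "\<not> is_pole f w" if "w \<in> ball z r - {z}" for w
  proof -
    have "g analytic_on {w}"
      using r(3) that by (metis analytic_at open_ball open_delete)
    then show ?thesis
      using analytic_at_imp_no_pole iso by (force simp: g_def)
  qed
  with bounds have "\<forall>w\<in>ball z r - {z}. \<not> is_pole f w \<and>
      c * norm (w - z) powi zorder f z \<le> norm (g w) \<and> norm (g w) \<le> M * norm (w - z) powi zorder f z"
    by blast
  with r(1,2) show ?thesis
    by (rule that)
qed

lemma quotient_bound_near_pole:
  assumes F: "\<forall>w. \<not> is_pole f w \<longrightarrow> (F has_field_derivative g w) (at w)" and "zorder f z < 0"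
  obtains B where "\<forall>\<^sub>F w in at z. norm ((F w - a) / g w) \<le> B"
proof -
  obtain r c M where r: "r > 0" "c > 0" and local: "\<forall>w\<in>ball z r - {z}. \<not> is_pole f w \<and>
      c * norm (w - z) powi zorder f z \<le> norm (g w) \<and> norm (g w) \<le> M * norm (w - z) powi zorder f z"
    by (rule g_local_bounds)
  then have no_pole: "\<And>w. w \<in> ball z r - {z} \<Longrightarrow> \<not> is_pole f w"
    and bounds: "\<And>w. w \<in> ball z r - {z} \<Longrightarrow>
      c * norm (w - z) powi zorder f z \<le> norm (g w) \<and> norm (g w) \<le> M * norm (w - z) powi zorder f z"
    by auto
  define k where "k = nat (- zorder f z)"
  have powi: "M * norm (w - z) powi zorder f z = M / norm (w - z) ^ k" for M w
    using \<open>zorder f z < 0\<close> by (simp add: power_int_def k_def divide_inverse power_inverse)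
  obtain C where "\<forall>w\<in>ball z (r/2) - {z}. norm (F w - a) \<le> C / norm (w - z) ^ k"
  proof (rule norm_le_of_deriv_power_bound_punctured[OF r(1)])
    show "((\<lambda>w. F w - a) has_field_derivative g u) (at u)" if "u \<in> ball z r - {z}" for u
      using F no_pole[OF that] by (auto intro!: derivative_eq_intros)
    show "norm (g u) \<le> M / norm (u - z) ^ k" if "u \<in> ball z r - {z}" for u
      using bounds[OF that] powi by simp
  qed
  then have C: "\<And>w. w \<in> ball z (r/2) - {z} \<Longrightarrow> norm (F w - a) \<le> C / norm (w - z) ^ k"
    by blast
  have "norm ((F w - a) / g w) \<le> C / c" if w: "w \<in> ball z (r/2) - {z}" for w
  proof -
    have "w \<in> ball z r - {z}"
      using w subset_ball[of "r/2" r z] r(1) by auto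
    then have "c / norm (w - z) ^ k \<le> norm (g w)" "0 < c / norm (w - z) ^ k"
      using bounds powi[of c] w r(2) by auto
    then have "norm (F w - a) / norm (g w) \<le> (C / norm (w - z) ^ k) / (c / norm (w - z) ^ k)"
      using C[OF w] by (intro frac_le) (auto intro: order_trans[OF norm_ge_zero C[OF w]])
    then show ?thesis
      using w by (simp add: norm_divide)
  qed
  moreover have "\<forall>\<^sub>F w in at z. w \<in> ball z (r/2) - {z}"
    using r(1) by (intro eventually_at_in_open) auto
  ultimately have "\<forall>\<^sub>F w in at z. norm ((F w - a) / g w) \<le> C / c"
    by (auto elim: eventually_mono)
  then show ?thesis
    by (rule that)
qed

lemma g_power_bounds_regular:
  assumes "zorder f z \<ge> 0"
  obtains r c M where "r > 0" "c > 0"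
    and "\<forall>u\<in>ball z r. \<not> is_pole f u \<and> norm (g u) \<le> M * norm (u - z) ^ nat (zorder f z)"
    and "\<forall>w\<in>ball z r - {z}. c * norm (w - z) ^ nat (zorder f z) \<le> norm (g w)"
proof -
  obtain r c M where r: "r > 0" "c > 0" and local: "\<forall>w\<in>ball z r - {z}. \<not> is_pole f w \<and>
      c * norm (w - z) powi zorder f z \<le> norm (g w) \<and> norm (g w) \<le> M * norm (w - z) powi zorder f z"
    by (rule g_local_bounds)
  define k where "k = nat (zorder f z)"
  have powi: "norm (w - z) powi zorder f z = norm (w - z) ^ k" for w
    using assms by (simp add: power_int_def k_def)
  have "\<not> is_pole f z"
    using assms isolated_pole_imp_neg_zorder meromorphic_on_UNIV_singularity(1)[OF meromorphic]
    by force
  then have "isCont g z"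
    using remove_sings_holomorphic_not_poles[OF meromorphic] open_not_poles[OF meromorphic]
    unfolding g_def by (metis continuous_on_eq_continuous_at holomorphic_on_imp_continuous_on mem_Collect_eq)
  moreover have "\<forall>\<^sub>F w in at z. norm (g w) \<le> M * norm (w - z) ^ k"
    using eventually_at_ball'[OF r(1), of z UNIV] local powi by (auto elim: eventually_mono)
  ultimately have "norm (g z) \<le> M * norm (z - z) ^ k"
    by (intro norm_le_of_eventually_le) (auto intro!: continuous_intros)
  then have "\<forall>u\<in>ball z r. \<not> is_pole f u \<and> norm (g u) \<le> M * norm (u - z) ^ k"
    using local powi \<open>\<not> is_pole f z\<close> by (metis Diff_iff empty_iff insert_iff)
  moreover have "\<forall>w\<in>ball z r - {z}. c * norm (w - z) ^ k \<le> norm (g w)"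
    using local powi by simp
  ultimately show ?thesis
    using that[OF r] unfolding k_def by blast
qed

text \<open>Near a regular point \<open>z\<close> where \<open>F' = g\<close> vanishes to order \<open>k\<close>, \<open>F - F z\<close> vanishes to
  order \<open>k + 1\<close>; if \<open>z\<close> is a zero, \<open>a = F z\<close> makes the quotient tend to \<open>0\<close>.\<close>

lemma quotient_bound_near_regular:
  assumes F: "\<forall>w. \<not> is_pole f w \<longrightarrow> (F has_field_derivative g w) (at w)"
    and "zorder f z \<ge> 0" and zero_value: "zorder f z > 0 \<Longrightarrow> F z = a"
  obtains c M where "c > 0"
    and "\<forall>\<^sub>F w in at z. norm ((F w - a) / g w) \<le> (M * norm (w - z) + norm (F z - a)) / c"
proof -
  define k where "k = nat (zorder f z)"
  obtain r c M where r: "r > 0" "c > 0"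
    and upper: "\<forall>u\<in>ball z r. \<not> is_pole f u \<and> norm (g u) \<le> M * norm (u - z) ^ k"
    and lower: "\<forall>w\<in>ball z r - {z}. c * norm (w - z) ^ k \<le> norm (g w)"
    unfolding k_def by (rule g_power_bounds_regular[OF \<open>zorder f z \<ge> 0\<close>])
  have mean_value: "norm (F w - F z) \<le> M * norm (w - z) ^ Suc k" if "w \<in> ball z r" for w
    using that F upper by (intro norm_diff_le_of_deriv_power_bound) auto
  have "norm ((F w - a) / g w) \<le> (M * norm (w - z) + norm (F z - a)) / c" if w: "w \<in> ball z r - {z}" for w
  proof -
    have "norm (F w - a) \<le> (M * norm (w - z) + norm (F z - a)) * norm (w - z) ^ k"
    proof (cases "k = 0")
      case True
      then show ?thesis
        using mean_value[of w] w norm_triangle_ineq[of "F w - F z" "F z - a"] by auto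
    next
      case False
      then have "F z = a"
        using zero_value by (simp add: k_def)
      then show ?thesis
        using mean_value[of w] w by (simp add: algebra_simps)
    qed
    moreover have "c * norm (w - z) ^ k \<le> norm (g w)" "0 < c * norm (w - z) ^ k"
      using lower w r(2) by auto
    ultimately have "norm (F w - a) / norm (g w)
        \<le> ((M * norm (w - z) + norm (F z - a)) * norm (w - z) ^ k) / (c * norm (w - z) ^ k)"
      by (intro frac_le) (auto intro: order_trans[OF norm_ge_zero])
    then show ?thesis
      using w by (simp add: norm_divide)
  qed
  then have "\<forall>\<^sub>F w in at z. norm ((F w - a) / g w) \<le> (M * norm (w - z) + norm (F z - a)) / c"
    using eventually_at_ball'[OF r(1), of z UNIV] by (auto elim: eventually_mono)
  with r(2) show ?thesis
    by (rule that)
qed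

lemma quotient_locally_bounded:
  assumes F: "\<forall>w. \<not> is_pole f w \<longrightarrow> (F has_field_derivative g w) (at w)"
    and zero_values: "\<And>z. zorder f z > 0 \<Longrightarrow> F z = a"
  shows "\<exists>B. \<forall>\<^sub>F w in at z. norm ((F w - a) / g w) \<le> B"
proof (cases "zorder f z < 0")
  case True
  obtain B where "\<forall>\<^sub>F w in at z. norm ((F w - a) / g w) \<le> B"
    using quotient_bound_near_pole[OF F True] .
  then show ?thesis ..
next
  case False
  then have "zorder f z \<ge> 0"
    by simp
  obtain c M where "c > 0"
    and bound: "\<forall>\<^sub>F w in at z. norm ((F w - a) / g w) \<le> (M * norm (w - z) + norm (F z - a)) / c"
    using quotient_bound_near_regular[OF F \<open>zorder f z \<ge> 0\<close> zero_values[of z]] .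
  have "\<forall>\<^sub>F w in at z. norm (w - z) < 1"
    using eventually_at_ball'[of 1 z UNIV] by (auto simp: dist_norm norm_minus_commute elim: eventually_mono)
  with bound have "\<forall>\<^sub>F w in at z. norm ((F w - a) / g w) \<le> (\<bar>M\<bar> + norm (F z - a)) / c"
  proof eventually_elim
    case (elim w)
    have "M * norm (w - z) \<le> \<bar>M\<bar>"
      using elim(2) by (metis abs_ge_self abs_mult abs_norm_cancel less_imp_le mult.commute
          mult_left_le_one_le norm_ge_zero order_trans abs_ge_zero)
    then show ?case
      using elim(1) \<open>c > 0\<close> by (smt (verit) divide_right_mono)
  qed
  then show ?thesis ..
qed

lemma quotient_analytic_near:
  assumes F: "\<forall>w. \<not> is_pole f w \<longrightarrow> (F has_field_derivative g w) (at w)"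
  shows "\<forall>\<^sub>F w in at z. \<not> is_pole f w \<and> g w \<noteq> 0 \<and> (\<lambda>w. (F w - a) / g w) analytic_on {w}"
proof -
  obtain r c M where r: "r > 0" "c > 0" and local: "\<forall>w\<in>ball z r - {z}. \<not> is_pole f w \<and>
      c * norm (w - z) powi zorder f z \<le> norm (g w) \<and> norm (g w) \<le> M * norm (w - z) powi zorder f z"
    by (rule g_local_bounds)
  note S = open_not_poles[OF meromorphic]
  have "F holomorphic_on {w. \<not> is_pole f w}"
    using F S by (auto simp: holomorphic_on_open field_differentiable_def)
  then have "F analytic_on {w. \<not> is_pole f w}" "g analytic_on {w. \<not> is_pole f w}"
    using S remove_sings_holomorphic_not_poles[OF meromorphic]
    by (simp_all add: analytic_on_open g_def)
  moreover have "\<not> is_pole f w \<and> g w \<noteq> 0" if "w \<in> ball z r - {z}" for w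
  proof -
    have "0 < c * norm (w - z) powi zorder f z"
      using r(2) that by (simp add: power_int_def)
    then show ?thesis
      using local that by force
  qed
  ultimately have "\<not> is_pole f w \<and> g w \<noteq> 0 \<and> (\<lambda>w. (F w - a) / g w) analytic_on {w}"
    if "w \<in> ball z r - {z}" for w
    using that by (auto intro!: analytic_intros intro: analytic_on_subset)
  then show ?thesis
    using eventually_at_ball'[OF r(1), of z UNIV] by (auto elim: eventually_mono)
qed

text \<open>The quotient \<open>(F - F z0) / g\<close> extends to an entire, lattice-periodic function, hence a
  constant, which vanishes at \<open>z0\<close>; so \<open>F\<close> would be constant near \<open>z0\<close> although \<open>F' = g\<close>.\<close>

theorem zero_not_unique:
  assumes "zorder f z0 > 0"
  shows "\<exists>z. zorder f z > 0 \<and> z - z0 \<notin> L"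
proof (rule ccontr)
  assume "\<nexists>z. zorder f z > 0 \<and> z - z0 \<notin> L"
  then have zeros: "\<And>z. zorder f z > 0 \<Longrightarrow> z - z0 \<in> L"
    by blast
  obtain F where F: "\<forall>w. \<not> is_pole f w \<longrightarrow> (F has_field_derivative g w) (at w)"
    and F_periodic: "\<forall>z. \<forall>l\<in>L. \<not> is_pole f z \<longrightarrow> F (z + l) = F z"
    by (rule periodic_primitive)
  have regular: "\<not> is_pole f z" if "zorder f z \<ge> 0" for z
    using that isolated_pole_imp_neg_zorder meromorphic_on_UNIV_singularity(1)[OF meromorphic]
    by force
  have F_at_zeros: "F z = F z0" if "zorder f z > 0" for z
    using F_periodic zeros[OF that] regular[of z0] assms by (metis add.commute diff_add_cancel less_imp_le)
  define h where "h w = (F w - F z0) / g w" for w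
  have "\<forall>\<^sub>F w in at z. h analytic_on {w}" for z
    using quotient_analytic_near[OF F, where z=z and a="F z0"] unfolding h_def[abs_def]
    by (auto elim: eventually_mono)
  moreover have "\<exists>B. \<forall>\<^sub>F w in at z. norm (h w) \<le> B" for z
    using quotient_locally_bounded[OF F, where a="F z0" and z=z] F_at_zeros unfolding h_def by blast
  ultimately have "remove_sings h holomorphic_on UNIV"
    by (rule remove_sings_entire_if_locally_bounded)
  moreover have "h (w + l) = h w" if "l \<in> L" for w l
    using F_periodic g_shift[OF that] is_pole_shift[OF that] that
    by (cases "is_pole f w") (simp_all add: h_def g_def)
  then have "remove_sings h (z + l) = remove_sings h z" if "l \<in> L" for z l
    using remove_sings_compose[OF filtermap_at_translate[of l z], of h] that by (simp add: comp_def)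
  ultimately obtain C where C: "\<And>z. remove_sings h z = C"
    using periodic_entire_constant by metis
  have "zorder f z0 \<ge> 0"
    using assms by simp
  obtain c M where "c > 0"
    and bound: "\<forall>\<^sub>F w in at z0. norm ((F w - F z0) / g w) \<le> (M * norm (w - z0) + norm (F z0 - F z0)) / c"
    using quotient_bound_near_regular[OF F \<open>zorder f z0 \<ge> 0\<close> F_at_zeros[of z0]] .
  have "((\<lambda>w. (M * norm (w - z0) + norm (F z0 - F z0)) / c) \<longlongrightarrow> 0) (at z0)"
    using \<open>c > 0\<close> by (auto intro!: tendsto_eq_intros)
  with bound have "h \<midarrow>z0\<rightarrow> 0"
    unfolding h_def[abs_def] by (rule Lim_null_comparison)
  then have "C = 0"
    using C remove_sings_eqI by metis
  have "\<forall>\<^sub>F w in at z0. \<not> is_pole f w \<and> g w \<noteq> 0 \<and> h analytic_on {w}"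
    using quotient_analytic_near[OF F, where z=z0 and a="F z0"] unfolding h_def[abs_def] .
  then have "\<forall>\<^sub>F w in at z0. (F has_field_derivative g w) (at w) \<and> g w \<noteq> 0 \<and> F w = F z0"
    by eventually_elim (use F C \<open>C = 0\<close> in \<open>auto simp: h_def dest!: remove_sings_at_analytic\<close>)
  then show False
    by (rule not_locally_constant_if_deriv_nonzero)
qed

end

section \<open>Pullbacks of the form under affine maps\<close>

lemma pullback_eq_affine_iff:
  "pullback_eq (\<lambda>z. \<alpha> * z + \<beta>) f c \<longleftrightarrow> (\<forall>z. \<forall>\<^sub>F w in at z. f (\<alpha> * w + \<beta>) * \<alpha> = c * f w)"
  unfolding pullback_eq_def by simp

lemma eventually_at_affine_iff:
  fixes \<alpha> \<beta> z :: complex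
  assumes "\<alpha> \<noteq> 0"
  shows "(\<forall>\<^sub>F w in at z. P (\<alpha> * w + \<beta>)) \<longleftrightarrow> (\<forall>\<^sub>F y in at (\<alpha> * z + \<beta>). P y)"
  using filtermap_at_affine[OF assms, of \<beta> z] by (metis eventually_filtermap)

lemma pullback_eq_affine_nonzero_const:
  assumes "pullback_eq (\<lambda>z. \<alpha> * z + \<beta>) f c" "\<alpha> \<noteq> 0" and nonzero: "\<exists>\<^sub>F w in at z0. f w \<noteq> 0"
  shows "c \<noteq> 0"
proof
  assume "c = 0"
  define z1 where "z1 = (z0 - \<beta>) / \<alpha>"
  have "\<forall>\<^sub>F w in at z1. f (\<alpha> * w + \<beta>) = 0"
    using assms(1,2) \<open>c = 0\<close> unfolding pullback_eq_affine_iff by (auto elim: eventually_mono)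
  then have "\<forall>\<^sub>F y in at z0. f y = 0"
    using eventually_at_affine_iff[OF assms(2), of "\<lambda>y. f y = 0" \<beta> z1] assms(2)
    by (simp add: z1_def)
  then show False
    using nonzero by (simp add: frequently_def)
qed

lemma zorder_affine:
  fixes \<alpha> \<beta> z :: complex
  assumes "f meromorphic_on UNIV" "\<alpha> \<noteq> 0"
  shows "zorder (\<lambda>w. f (\<alpha> * w + \<beta>)) z = zorder f (\<alpha> * z + \<beta>)"
proof -
  define f1 where "f1 u = f (u + \<beta>)" for u
  have "f1 meromorphic_on {\<alpha> * z}"
    unfolding f1_def by (rule meromorphic_on_compose[OF assms(1)]) (auto intro!: analytic_intros)
  then have "zorder (\<lambda>w. f1 (\<alpha> * w)) z = zorder f1 (\<alpha> * z)"
    using assms(2) by (rule zorder_scale)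
  also have "zorder f1 (\<alpha> * z) = zorder (\<lambda>u. f (u + (\<alpha> * z + \<beta>))) 0"
    unfolding f1_def by (subst zorder_shift) (simp add: add_ac)
  also have "\<dots> = zorder f (\<alpha> * z + \<beta>)"
    by (rule zorder_shift[symmetric])
  finally show ?thesis
    by (simp add: f1_def)
qed

lemma pullback_eq_affine_zorder:
  assumes "pullback_eq (\<lambda>z. \<alpha> * z + \<beta>) f c" "f meromorphic_on UNIV" "\<alpha> \<noteq> 0" "c \<noteq> 0"
  shows "zorder f (\<alpha> * z + \<beta>) = zorder f z"
proof -
  have "zorder (\<lambda>w. f (\<alpha> * w + \<beta>)) z = zorder (\<lambda>w. (c / \<alpha>) * f w) z"
    using assms(1,3) unfolding pullback_eq_affine_iff
    by (intro zorder_cong) (auto elim!: eventually_mono simp: field_simps)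
  also have "\<dots> = zorder f z"
    using assms(3,4) by (intro zorder_cmult) simp
  finally show ?thesis
    using zorder_affine[OF assms(2,3)] by simp
qed

lemma pullback_eq_reflection_sign:
  assumes "pullback_eq (\<lambda>z. \<beta> - z) f c" and nonzero: "\<exists>\<^sub>F w in at z0. f w \<noteq> 0"
  shows "c = 1 \<or> c = -1"
proof -
  have pb: "\<forall>\<^sub>F w in at z. f (\<beta> - w) = - c * f w" for z
  proof -
    have "\<forall>\<^sub>F w in at z. - f (\<beta> - w) = c * f w"
      using assms(1) unfolding pullback_eq_def by simp
    then show ?thesis
      by (rule eventually_mono) (metis minus_minus mult_minus_left)
  qed
  have "\<forall>\<^sub>F w in at z0. f w = - c * f (\<beta> - w)"
    using pb[of "\<beta> - z0"] eventually_at_affine_iff[of "-1" "\<lambda>y. f (\<beta> - y) = - c * f y" \<beta> z0]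
    by simp
  with pb[of z0] have "\<forall>\<^sub>F w in at z0. f w = c\<^sup>2 * f w"
    by eventually_elim (simp add: power2_eq_square)
  with nonzero have "\<exists>\<^sub>F w in at z0. f w \<noteq> 0 \<and> f w = c\<^sup>2 * f w"
    by (rule frequently_eventually_frequently)
  then have "c\<^sup>2 = 1"
    by (metis (mono_tags, lifting) frequently_ex mult_cancel_right1)
  then show ?thesis
    by (simp add: power2_eq_1_iff)
qed

lemma zorder_translate_eq:
  assumes "\<forall>\<^sub>F w in at z. f (w + l) = f w"
  shows "zorder f (z + l) = zorder f z"
proof -
  have "\<forall>\<^sub>F u in filtermap (\<lambda>w. w + z) (at 0). f (u + l) = f u"
    using assms filtermap_at_translate[of z 0] by simp
  then have "\<forall>\<^sub>F u in at 0. f (u + z + l) = f (u + z)"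
    by (simp add: eventually_filtermap)
  then have "zorder (\<lambda>u. f (u + (z + l))) 0 = zorder (\<lambda>u. f (u + z)) 0"
    by (intro zorder_cong) (auto simp: add.assoc elim: eventually_mono)
  then show ?thesis
    using zorder_shift[of f "z + l"] zorder_shift[of f z] by simp
qed

lemma residue_translate_eq:
  assumes "\<forall>\<^sub>F w in at z. f (w + l) = f w"
  shows "residue f (z + l) = residue f z"
proof -
  have "\<forall>\<^sub>F u in filtermap (\<lambda>w. w + z) (at 0). f (u + l) = f u"
    using assms filtermap_at_translate[of z 0] by simp
  then have "\<forall>\<^sub>F u in at 0. f (z + l + u) = f (z + u)"
    by (simp add: eventually_filtermap add_ac)
  then have "residue (\<lambda>u. f (z + l + u)) 0 = residue (\<lambda>u. f (z + u)) 0"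
    by (intro residue_cong) auto
  then show ?thesis
    using residue_shift_0[of f "z + l"] residue_shift_0[of f z] by simp
qed

context complex_lattice
begin

lemma zorder_lat_cong_eq:
  assumes "lattice_periodic_meromorphic L f" "lat_cong L z w"
  shows "zorder f z = zorder f w"
  using zorder_translate_eq[where f=f and z=w and l="z - w"] assms
  unfolding lattice_periodic_meromorphic_def lat_cong_def by simp

lemma residue_at_pole_0:
  assumes "lattice_periodic_meromorphic L f" "\<forall>z. zorder f z < 0 \<longrightarrow> (\<exists>j<p. lat_cong L z (q j))"
    and "\<forall>j<p. residue f (q j) = 0" and pole: "is_pole f z"
  shows "residue f z = 0"
proof -
  have mero: "f meromorphic_on UNIV" and per: "\<And>l w. l \<in> L \<Longrightarrow> \<forall>\<^sub>F u in at w. f (u + l) = f u"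
    using assms(1) unfolding lattice_periodic_meromorphic_def by auto
  obtain j where "j < p" "z - q j \<in> L"
    using assms(2) isolated_pole_imp_neg_zorder[OF meromorphic_on_UNIV_singularity(1)[OF mero] pole]
    unfolding lat_cong_def by blast
  then show ?thesis
    using residue_translate_eq[OF per[of "z - q j" "q j"]] assms(3) by simp
qed

lemma affine_pullback_fixes_zero:
  assumes "pullback_eq (\<lambda>z. \<alpha> * z + \<beta>) f c" "\<alpha> \<noteq> 0" "f meromorphic_on UNIV"
    and "\<exists>\<^sub>F w in at z0. f w \<noteq> 0" "zorder f z0 > 0" "\<forall>z. zorder f z > 0 \<longrightarrow> lat_cong L z z0"
  shows "lat_cong L (\<alpha> * z0 + \<beta>) z0"
proof -
  have "c \<noteq> 0"
    using pullback_eq_affine_nonzero_const[OF assms(1,2,4)] .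
  then show ?thesis
    using pullback_eq_affine_zorder[OF assms(1,3,2)] assms(5,6) by simp
qed

lemma reflection_pullback_sign:
  assumes "lattice_periodic_meromorphic L f" "\<exists>\<^sub>F w in at z0. f w \<noteq> 0"
    and "\<And>z. is_pole f z \<Longrightarrow> residue f z = 0"
    and "zorder f z0 > 0" "\<forall>z. zorder f z > 0 \<longrightarrow> z - z0 \<in> L"
    and pb: "pullback_eq (\<lambda>z. \<beta> - z) f c"
  shows "c = -1"
proof -
  have mero: "f meromorphic_on UNIV"
    using assms(1) unfolding lattice_periodic_meromorphic_def by blast
  have "c \<noteq> 1"
  proof
    assume "c = 1"
    with pb have "\<forall>\<^sub>F w in at z. - f (\<beta> - w) = f w" for z
      unfolding pullback_eq_def by simp
    then have "\<forall>\<^sub>F w in at z. f (\<beta> - w) = - f w" for z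
      by (rule eventually_mono) (metis minus_minus)
    then interpret odd_elliptic_form w1 w2 f \<beta>
      using assms(1,3) meromorphic_frequently_nonzero[OF mero assms(2)]
      by unfold_locales auto
    show False
      using zero_not_unique assms(4,5) by blast
  qed
  then show ?thesis
    using pullback_eq_reflection_sign[OF pb assms(2)] by blast
qed

end

theorem proposition2p8:
  fixes w1 w2 :: complex and f :: "complex \<Rightarrow> complex"
    and p :: nat and a :: nat and b :: "nat \<Rightarrow> nat"
    and z0 :: complex and q :: "nat \<Rightarrow> complex" and s :: "complex \<Rightarrow> complex"
  defines "L \<equiv> lattice w1 w2"
  assumes lattice_nondeg: "Im (w2 / w1) \<noteq> 0"
    and p_pos: "p \<ge> 1"
    and b_ge2: "\<forall>j<p. b j \<ge> 2"
    and a_def: "a = (\<Sum>j<p. b j)"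
    and form: "lattice_periodic_meromorphic L f"
    and nonzero: "\<exists>\<^sub>F w in at z0. f w \<noteq> 0"
    and zero: "zorder f z0 = int a"
    and poles: "\<forall>j<p. zorder f (q j) = - int (b j)"
    and residues: "\<forall>j<p. residue f (q j) = 0"
    and poles_distinct: "\<forall>i<p. \<forall>j<p. lat_cong L (q i) (q j) \<longrightarrow> i = j"
    and no_other_zeros: "\<forall>z. zorder f z > 0 \<longrightarrow> lat_cong L z z0"
    and no_other_poles: "\<forall>z. zorder f z < 0 \<longrightarrow> (\<exists>j<p. lat_cong L z (q j))"
    and aut: "torus_automorphism_lift L s"
    and fixes_poles: "\<forall>j<p. lat_cong L (s (q j)) (q j)"
    and proj_invariant: "\<exists>c. pullback_eq s f c"
    and nontrivial: "\<exists>z. \<not> lat_cong L (s z) z"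
  shows "(pullback_eq s f (-1) \<and> (\<forall>z. lat_cong L ((s ^^ 2) z) z))
       \<or> ((\<forall>z. lat_cong L ((s ^^ 3) z) z) \<and> p \<in> {1, 2})
       \<or> ((\<forall>z. lat_cong L ((s ^^ 4) z) z) \<and> p = 1)"
proof -
  interpret complex_lattice w1 w2
    rewrites "lattice w1 w2 = L"
    using lattice_nondeg by unfold_locales (simp_all add: L_def)
  have mero: "f meromorphic_on UNIV"
    using form unfolding lattice_periodic_meromorphic_def by blast
  obtain \<alpha> \<beta> where "\<alpha> \<noteq> 0" and s: "s = (\<lambda>z. \<alpha> * z + \<beta>)"
    and unit: "\<forall>l\<in>L. \<alpha> * l \<in> L" "\<forall>l\<in>L. l / \<alpha> \<in> L"
    using torus_automorphism_affine[OF aut] .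
  obtain c where pb: "pullback_eq (\<lambda>z. \<alpha> * z + \<beta>) f c"
    using proj_invariant s by blast
  have "2 \<le> b 0" "b 0 \<le> (\<Sum>j<p. b j)"
    using b_ge2 p_pos by (auto intro: member_le_sum)
  then have "a > 0"
    by (simp add: a_def)
  then have "zorder f z0 > 0"
    by (simp add: zero)
  define x where "x i = (if i = 0 then z0 else q (i - 1))" for i
  have fixed: "\<alpha> * x i + \<beta> - x i \<in> L" if "i < p + 1" for i
    using affine_pullback_fixes_zero[OF pb \<open>\<alpha> \<noteq> 0\<close> mero nonzero \<open>zorder f z0 > 0\<close> no_other_zeros]
      fixes_poles that unfolding x_def lat_cong_def s by auto
  have incongruent: "i = j" if "i < p + 1" "j < p + 1" "x i - x j \<in> L" for i j
  proof -
    have "zorder f (x k) > 0 \<longleftrightarrow> k = 0" if "k < p + 1" for k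
      using \<open>zorder f z0 > 0\<close> poles[rule_format, of "k - 1"] that by (auto simp: x_def)
    then have ij: "i = 0 \<longleftrightarrow> j = 0"
      using zorder_lat_cong_eq[OF form, of "x i" "x j"] that unfolding lat_cong_def by metis
    show ?thesis
    proof (cases "i = 0")
      case False
      then have "q (i - 1) - q (j - 1) \<in> L" "i - 1 < p" "j - 1 < p" "j \<noteq> 0"
        using that ij by (auto simp: x_def)
      then show ?thesis
        using poles_distinct False unfolding lat_cong_def by fastforce
    qed (use ij in simp)
  qed
  have iterate: "\<forall>z. lat_cong L ((s ^^ n) z) z" if "\<alpha> ^ n = 1" "\<alpha> \<noteq> 1" for n
    using funpow_affine_root_of_unity[OF that] unfolding s lat_cong_def by (simp add: L_def)
  show ?thesis
  proof (cases "Im \<alpha> = 0")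
    case True
    then consider "\<alpha> = 1" | "\<alpha> = -1"
      using real_lattice_unit[OF _ \<open>\<alpha> \<noteq> 0\<close> unit] by blast
    then show ?thesis
    proof cases
      case 1
      then show ?thesis
        using fixed[of 1] nontrivial p_pos unfolding s lat_cong_def by (simp add: x_def)
    next
      case 2
      then have "pullback_eq (\<lambda>z. \<beta> - z) f c"
        using pb by simp
      then have "c = -1"
        using reflection_pullback_sign[OF form nonzero residue_at_pole_0[OF form no_other_poles residues]]
          \<open>zorder f z0 > 0\<close> no_other_zeros unfolding lat_cong_def by simp
      then show ?thesis
        using pb iterate[of 2] 2 unfolding s by simp
    qed
  next
    case False
    obtain A B C D where M: "\<alpha> * w1 = of_int A * w1 + of_int B * w2" "\<alpha> * w2 = of_int C * w1 + of_int D * w2"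
      "A * D - B * C = 1" "A + D \<in> {-1, 0, 1}" "\<alpha>\<^sup>2 = of_int (A + D) * \<alpha> - 1"
      using nonreal_lattice_unit[OF False unit] .
    have "(\<alpha> ^ 3 = 1 \<and> \<alpha> \<noteq> 1 \<and> p + 1 \<le> 3) \<or> (\<alpha> ^ 4 = 1 \<and> \<alpha> \<noteq> 1 \<and> p + 1 = 2)"
      using rotation_fixed_points_cases[where N="p + 1" and x=x and \<beta>=\<beta>, OF M] fixed incongruent p_pos
      by simp
    then show ?thesis
      using iterate[of 3] iterate[of 4] p_pos by auto
  qed
qed

end
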